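(* Let $N\geq1$ and let $r$ be an integer with $-(N-1)\leq r\leq N-1$ and $r\neq\pm(N-2)$. Let $\hat\rho$ be any $N$-qubit state with Dyson's rank at most $r$, and let $\mathbf n\in\mathbb R^3$ be a unit vector. If $r\neq4-N$, then $$F_Q[\hat\rho,\hat J_{\mathbf n}]\leq\frac{(N+r)^2}{4}-\frac14+N,$$ and if $r=4-N$, then $F_Q[\hat\rho,\hat J_{\mathbf n}]\leq N+4$.
   Context: Consider $N$ qubits labelled $1,\dots,N$. For a unit vector $\mathbf n\in\mathbb R^3$, $\hat J_{\mathbf n}=\frac12\sum_{i=1}^N \mathbf n\cdot\hat{\boldsymbol\sigma}^{(i)}$ with $\hat{\boldsymbol\sigma}^{(i)}$ the vector of Pauli matrices of qubit $i$. For $\hat\rho=\sum_k\lambda_k|k\rangle\langle k|$ and Hermitian $\hat A$, the quantum Fisher information is $F_Q[\hat\rho,\hat A]=2\sum_{k,l:\lambda_k+\lambda_l>0}\frac{(\lambda_k-\lambda_l)^2}{\lambda_k+\lambda_l}|\langle k|\hat A|l\rangle|^2$. A partition $\Lambda=\{A_1,\dots,A_{|\Lambda|}\}$ of $\{1,\dots,N\}$ into nonempty disjoint subsets has subset sizes $N_l=|A_l|$ and $\max\Lambda=\max_lN_l$. A state is $\Lambda$-separable if it equals $\sum_\gamma p_\gamma\hat\rho^{(\gamma)}_{A_1}\otimes\cdots\otimes\hat\rho^{(\gamma)}_{A_{|\Lambda|}}$ for a probability distribution $p_\gamma$ and states $\hat\rho^{(\gamma)}_{A_l}$ of the qubits in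 $A_l$. A state has Dyson's rank at most $r$ if it is a convex combination of $\Lambda$-separable states over partitions $\Lambda$ with $\max\Lambda-|\Lambda|\leq r$. *)

theory Defs
  imports Complex_Main "HOL-Library.Disjoint_Sets"
begin

text \<open>Computational basis configurations of the qubits in a set S of labels:
  a basis state is a bit assignment x, with x i = False for i outside S
  (False = |0>, True = |1>).\<close>

type_synonym config = "nat \<Rightarrow> bool"
type_synonym op = "config \<Rightarrow> config \<Rightarrow> complex"

definition cfg :: "nat set \<Rightarrow> config set" where
  "cfg S = {x. \<forall>i. i \<notin> S \<longrightarrow> \<not> x i}"

definition restr :: "nat set \<Rightarrow> config \<Rightarrow> config" where
  "restr A x = (\<lambda>i. if i \<in> A then x i else False)"

definition density_on :: "nat set \<Rightarrow> op \<Rightarrow> bool" where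
  "density_on S \<rho> \<longleftrightarrow>
     (\<forall>x\<in>cfg S. \<forall>y\<in>cfg S. \<rho> y x = cnj (\<rho> x y)) \<and>
     (\<forall>v :: config \<Rightarrow> complex.
        0 \<le> Re (\<Sum>x\<in>cfg S. \<Sum>y\<in>cfg S. cnj (v x) * \<rho> x y * v y)) \<and>
     (\<Sum>x\<in>cfg S. \<rho> x x) = 1"

definition separable_wrt :: "nat \<Rightarrow> nat set set \<Rightarrow> op \<Rightarrow> bool" where
  "separable_wrt N \<Lambda> \<sigma> \<longleftrightarrow>
     (\<exists>(m::nat) (p::nat \<Rightarrow> real) (\<tau>::nat \<Rightarrow> nat set \<Rightarrow> op).
        (\<forall>g<m. 0 \<le> p g) \<and> (\<Sum>g<m. p g) = 1 \<and>
        (\<forall>g<m. \<forall>A\<in>\<Lambda>. density_on A (\<tau> g A)) \<and>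
        (\<forall>x\<in>cfg {1..N}. \<forall>y\<in>cfg {1..N}.
           \<sigma> x y = (\<Sum>g<m. complex_of_real (p g) *
                        (\<Prod>A\<in>\<Lambda>. \<tau> g A (restr A x) (restr A y)))))"

definition dyson_rank_le :: "nat \<Rightarrow> int \<Rightarrow> op \<Rightarrow> bool" where
  "dyson_rank_le N r \<rho> \<longleftrightarrow>
     (\<exists>(m::nat) (p::nat \<Rightarrow> real) (\<Lambda>::nat \<Rightarrow> nat set set) (\<sigma>::nat \<Rightarrow> op).
        (\<forall>j<m. 0 \<le> p j) \<and> (\<Sum>j<m. p j) = 1 \<and>
        (\<forall>j<m. partition_on {1..N} (\<Lambda> j) \<and>
               int (Max (card ` \<Lambda> j)) - int (card (\<Lambda> j)) \<le> r \<and>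
               separable_wrt N (\<Lambda> j) (\<sigma> j)) \<and>
        (\<forall>x\<in>cfg {1..N}. \<forall>y\<in>cfg {1..N}.
           \<rho> x y = (\<Sum>j<m. complex_of_real (p j) * \<sigma> j x y)))"

text \<open>Pauli combination n.sigma for n = (n1,n2,n3) on a single qubit
  (rows/columns: False = |0>, True = |1>), and the collective spin J_n.\<close>
definition pauli_n :: "real \<Rightarrow> real \<Rightarrow> real \<Rightarrow> bool \<Rightarrow> bool \<Rightarrow> complex" where
  "pauli_n n1 n2 n3 a b =
     (if \<not> a \<and> \<not> b then complex_of_real n3
      else if \<not> a \<and> b then Complex n1 (- n2)
      else if a \<and> \<not> b then Complex n1 n2
      else complex_of_real (- n3))"

definition J_op :: "nat \<Rightarrow> real \<Rightarrow> real \<Rightarrow> real \<Rightarrow> op" where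
  "J_op N n1 n2 n3 x y =
     (1/2) * (\<Sum>i\<in>{1..N}. if (\<forall>j. j \<noteq> i \<longrightarrow> x j = y j)
                            then pauli_n n1 n2 n3 (x i) (y i) else 0)"

text \<open>Quantum Fisher information via an orthonormal eigendecomposition
  rho = sum_k lambda_k |e_k><e_k| (eigenvectors indexed by the basis configurations).\<close>
definition eigendecomp :: "nat set \<Rightarrow> op \<Rightarrow> (config \<Rightarrow> config \<Rightarrow> complex) \<Rightarrow> (config \<Rightarrow> real) \<Rightarrow> bool" where
  "eigendecomp S \<rho> e lam \<longleftrightarrow>
     (\<forall>k\<in>cfg S. \<forall>l\<in>cfg S.
        (\<Sum>x\<in>cfg S. cnj (e k x) * e l x) = (if k = l then 1 else 0)) \<and>
     (\<forall>k\<in>cfg S. \<forall>x\<in>cfg S. (\<Sum>y\<in>cfg S. \<rho> x y * e k y) = complex_of_real (lam k) * e k x)"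

definition mat_el :: "nat set \<Rightarrow> (config \<Rightarrow> complex) \<Rightarrow> op \<Rightarrow> (config \<Rightarrow> complex) \<Rightarrow> complex" where
  "mat_el S u A v = (\<Sum>x\<in>cfg S. \<Sum>y\<in>cfg S. cnj (u x) * A x y * v y)"

definition QFI :: "nat set \<Rightarrow> op \<Rightarrow> op \<Rightarrow> real" where
  "QFI S \<rho> A =
     (let (e, lam) = (SOME (e, lam). eigendecomp S \<rho> e lam) in
      2 * (\<Sum>k\<in>cfg S. \<Sum>l\<in>cfg S.
             if lam k + lam l > 0
             then (lam k - lam l)^2 / (lam k + lam l) * (cmod (mat_el S (e k) A (e l)))^2
             else 0))"

end

theory Submission
  imports Defs "Jordan_Normal_Form.Char_Poly"
begin

definition mmult :: "'a set \<Rightarrow> ('a \<Rightarrow> 'a \<Rightarrow> complex) \<Rightarrow> ('a \<Rightarrow> 'a \<Rightarrow> complex) \<Rightarrow> 'a \<Rightarrow> 'a \<Rightarrow> complex"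
  where "mmult C X Y = (\<lambda>x z. \<Sum>y\<in>C. X x y * Y y z)"

definition mvec :: "'a set \<Rightarrow> ('a \<Rightarrow> 'a \<Rightarrow> complex) \<Rightarrow> ('a \<Rightarrow> complex) \<Rightarrow> 'a \<Rightarrow> complex"
  where "mvec C X v = (\<lambda>x. \<Sum>y\<in>C. X x y * v y)"

definition madj :: "('a \<Rightarrow> 'a \<Rightarrow> complex) \<Rightarrow> 'a \<Rightarrow> 'a \<Rightarrow> complex"
  where "madj X = (\<lambda>x y. cnj (X y x))"

definition ident :: "'a \<Rightarrow> 'a \<Rightarrow> complex"
  where "ident x y = (if x = y then 1 else 0)"

definition cinner :: "'a set \<Rightarrow> ('a \<Rightarrow> complex) \<Rightarrow> ('a \<Rightarrow> complex) \<Rightarrow> complex"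
  where "cinner C u v = (\<Sum>x\<in>C. cnj (u x) * v x)"

definition expect :: "'a set \<Rightarrow> ('a \<Rightarrow> 'a \<Rightarrow> complex) \<Rightarrow> ('a \<Rightarrow> 'a \<Rightarrow> complex) \<Rightarrow> complex"
  where "expect C \<sigma> X = (\<Sum>x\<in>C. mmult C \<sigma> X x x)"

definition hermitian_on :: "'a set \<Rightarrow> ('a \<Rightarrow> 'a \<Rightarrow> complex) \<Rightarrow> bool"
  where "hermitian_on C X \<longleftrightarrow> (\<forall>x\<in>C. \<forall>y\<in>C. X y x = cnj (X x y))"

definition psd_on :: "'a set \<Rightarrow> ('a \<Rightarrow> 'a \<Rightarrow> complex) \<Rightarrow> bool"
  where "psd_on C X \<longleftrightarrow> (\<forall>v. 0 \<le> Re (\<Sum>x\<in>C. \<Sum>y\<in>C. cnj (v x) * X x y * v y))"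

definition unitary_on :: "'a set \<Rightarrow> ('a \<Rightarrow> 'a \<Rightarrow> complex) \<Rightarrow> bool"
  where "unitary_on C U \<longleftrightarrow>
    (\<forall>x\<in>C. \<forall>y\<in>C. mmult C (madj U) U x y = ident x y \<and> mmult C U (madj U) x y = ident x y)"

lemma hermitian_on_cnj: "hermitian_on C X \<Longrightarrow> x \<in> C \<Longrightarrow> y \<in> C \<Longrightarrow> cnj (X x y) = X y x"
  unfolding hermitian_on_def by metis

lemma density_on_hermitian: "density_on S \<rho> \<Longrightarrow> hermitian_on (cfg S) \<rho>"
  unfolding density_on_def hermitian_on_def by blast

lemma density_on_psd: "density_on S \<rho> \<Longrightarrow> psd_on (cfg S) \<rho>"
  unfolding density_on_def psd_on_def by blast

lemma density_on_trace: "density_on S \<rho> \<Longrightarrow> (\<Sum>x\<in>cfg S. \<rho> x x) = 1"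
  unfolding density_on_def by blast

lemma finite_cfg: "finite S \<Longrightarrow> finite (cfg S)"
proof -
  assume "finite S"
  have "cfg S \<subseteq> (\<lambda>T i. i \<in> T) ` Pow S"
  proof
    fix x assume "x \<in> cfg S"
    then have "{i. x i} \<in> Pow S" by (auto simp: cfg_def)
    then show "x \<in> (\<lambda>T i. i \<in> T) ` Pow S" by (rule rev_image_eqI) simp
  qed
  then show ?thesis using \<open>finite S\<close> by (simp add: finite_subset)
qed

lemma sum_swap3: "(\<Sum>x\<in>A. \<Sum>y\<in>B. \<Sum>z\<in>D. f x y z) = (\<Sum>z\<in>D. \<Sum>x\<in>A. \<Sum>y\<in>B. f x y z)"
  by (simp add: sum.swap[of _ B D] sum.swap[of _ A D])

lemma mmult_assoc: "mmult C (mmult C X Y) Z = mmult C X (mmult C Y Z)"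
proof (intro ext)
  fix x z
  have "mmult C (mmult C X Y) Z x z = (\<Sum>w\<in>C. \<Sum>y\<in>C. X x y * Y y w * Z w z)"
    by (simp add: mmult_def sum_distrib_right)
  also have "\<dots> = (\<Sum>y\<in>C. \<Sum>w\<in>C. X x y * Y y w * Z w z)"
    by (rule sum.swap)
  also have "\<dots> = mmult C X (mmult C Y Z) x z"
    by (simp add: mmult_def sum_distrib_left mult.assoc)
  finally show "mmult C (mmult C X Y) Z x z = mmult C X (mmult C Y Z) x z" .
qed

lemma mvec_mmult: "mvec C (mmult C X Y) v = mvec C X (mvec C Y v)"
proof (intro ext)
  fix x
  have "mvec C (mmult C X Y) v x = (\<Sum>w\<in>C. \<Sum>y\<in>C. X x y * Y y w * v w)"
    by (simp add: mvec_def mmult_def sum_distrib_right)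
  also have "\<dots> = (\<Sum>y\<in>C. \<Sum>w\<in>C. X x y * Y y w * v w)"
    by (rule sum.swap)
  also have "\<dots> = mvec C X (mvec C Y v) x"
    by (simp add: mvec_def sum_distrib_left mult.assoc)
  finally show "mvec C (mmult C X Y) v x = mvec C X (mvec C Y v) x" .
qed

lemma madj_mmult: "madj (mmult C X Y) = mmult C (madj Y) (madj X)"
  by (simp add: madj_def mmult_def mult.commute fun_eq_iff)

lemma madj_madj [simp]: "madj (madj X) = X"
  by (simp add: madj_def fun_eq_iff)

lemma madj_ident [simp]: "madj ident = ident"
  by (simp add: madj_def ident_def fun_eq_iff)

lemma ident_mult: "ident x y * a = (if x = y then a else 0)" "a * ident x y = (if x = y then a else 0)"
  by (simp_all add: ident_def)

lemma mmult_ident_left: "finite C \<Longrightarrow> x \<in> C \<Longrightarrow> mmult C ident X x z = X x z"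
  by (simp add: mmult_def ident_mult)

lemma mmult_ident_right: "finite C \<Longrightarrow> z \<in> C \<Longrightarrow> mmult C X ident x z = X x z"
  by (simp add: mmult_def ident_mult)

lemma mvec_ident: "finite C \<Longrightarrow> x \<in> C \<Longrightarrow> mvec C ident v x = v x"
  by (simp add: mvec_def ident_mult)

lemma mmult_cong:
  "(\<And>y. y \<in> C \<Longrightarrow> X x y = X' x y) \<Longrightarrow> (\<And>y. y \<in> C \<Longrightarrow> Y y z = Y' y z)
    \<Longrightarrow> mmult C X Y x z = mmult C X' Y' x z"
  by (simp add: mmult_def)

lemma mvec_cong:
  "(\<And>y. y \<in> C \<Longrightarrow> X x y = X' x y) \<Longrightarrow> (\<And>y. y \<in> C \<Longrightarrow> v y = v' y) \<Longrightarrow> mvec C X v x = mvec C X' v' x"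
  by (simp add: mvec_def)

lemma mmult_add_left: "mmult C (\<lambda>x y. P x y + Q x y) R = (\<lambda>x z. mmult C P R x z + mmult C Q R x z)"
  and mmult_add_right: "mmult C R (\<lambda>x y. P x y + Q x y) = (\<lambda>x z. mmult C R P x z + mmult C R Q x z)"
  and mmult_diff_left: "mmult C (\<lambda>x y. P x y - Q x y) R = (\<lambda>x z. mmult C P R x z - mmult C Q R x z)"
  and mmult_diff_right: "mmult C R (\<lambda>x y. P x y - Q x y) = (\<lambda>x z. mmult C R P x z - mmult C R Q x z)"
  and mmult_smult_left: "mmult C (\<lambda>x y. a * P x y) R = (\<lambda>x z. a * mmult C P R x z)"
  and mmult_smult_right: "mmult C R (\<lambda>x y. a * P x y) = (\<lambda>x z. a * mmult C R P x z)"
  and mmult_sum_left: "mmult C (\<lambda>x y. \<Sum>i\<in>I. F i x y) R = (\<lambda>x z. \<Sum>i\<in>I. mmult C (F i) R x z)"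
  and mmult_sum_right: "mmult C R (\<lambda>x y. \<Sum>i\<in>I. F i x y) = (\<lambda>x z. \<Sum>i\<in>I. mmult C R (F i) x z)"
  by (simp_all add: mmult_def fun_eq_iff sum.distrib sum_subtractf sum_distrib_left sum_distrib_right
      algebra_simps sum.swap[of _ C I])

lemma cinner_columns: "cinner C (\<lambda>x. U x k) (\<lambda>x. U x l) = mmult C (madj U) U k l"
  by (simp add: cinner_def mmult_def madj_def)

lemma cnj_cinner: "cnj (cinner C u v) = cinner C v u"
  by (simp add: cinner_def mult.commute)

lemma cinner_smult_left: "cinner C (\<lambda>x. a * u x) v = cnj a * cinner C u v"
  and cinner_smult_right: "cinner C u (\<lambda>x. a * v x) = a * cinner C u v"
  and cinner_diff_left: "cinner C (\<lambda>x. u x - u' x) v = cinner C u v - cinner C u' v"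
  and cinner_diff_right: "cinner C u (\<lambda>x. v x - v' x) = cinner C u v - cinner C u v'"
  by (simp_all add: cinner_def algebra_simps sum_distrib_left sum_subtractf)

lemma cinner_self: "cinner C u u = of_real (\<Sum>x\<in>C. (cmod (u x))\<^sup>2)"
  by (simp add: cinner_def complex_norm_square mult.commute del: of_real_power)

lemma cinner_self_pos: "finite C \<Longrightarrow> x \<in> C \<Longrightarrow> u x \<noteq> 0 \<Longrightarrow> 0 < (\<Sum>x\<in>C. (cmod (u x))\<^sup>2)"
  by (rule sum_pos2[of C x]) auto

lemma expect_cong: "(\<And>x y. x \<in> C \<Longrightarrow> y \<in> C \<Longrightarrow> X x y = X' x y) \<Longrightarrow> expect C \<sigma> X = expect C \<sigma> X'"
  by (simp add: expect_def mmult_def)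

lemma expect_add: "expect C \<sigma> (\<lambda>x y. P x y + Q x y) = expect C \<sigma> P + expect C \<sigma> Q"
  and expect_diff: "expect C \<sigma> (\<lambda>x y. P x y - Q x y) = expect C \<sigma> P - expect C \<sigma> Q"
  and expect_smult: "expect C \<sigma> (\<lambda>x y. a * P x y) = a * expect C \<sigma> P"
  and expect_sum: "expect C \<sigma> (\<lambda>x y. \<Sum>i\<in>I. F i x y) = (\<Sum>i\<in>I. expect C \<sigma> (F i))"
  by (simp_all add: expect_def mmult_add_right mmult_diff_right mmult_smult_right mmult_sum_right
      sum.distrib sum_subtractf sum_distrib_left sum.swap[of _ C I])

lemma expect_ident: "finite C \<Longrightarrow> expect C \<sigma> ident = (\<Sum>x\<in>C. \<sigma> x x)"
  by (simp add: expect_def mmult_ident_right)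

lemma expect_mixture:
  assumes "\<And>x y. x \<in> C \<Longrightarrow> y \<in> C \<Longrightarrow> \<rho> x y = (\<Sum>j<m. of_real (p j) * \<sigma> j x y)"
  shows "expect C \<rho> X = (\<Sum>j<m. of_real (p j) * expect C (\<sigma> j) X)"
  using assms by (simp add: expect_def mmult_def sum_distrib_left sum_distrib_right mult.assoc
      sum.swap[of _ C "{..<m}"])

lemma expect_hermitian_real:
  assumes "hermitian_on C \<sigma>" "hermitian_on C X"
  shows "expect C \<sigma> X \<in> \<real>"
proof -
  have "cnj (expect C \<sigma> X) = (\<Sum>x\<in>C. \<Sum>y\<in>C. \<sigma> y x * X x y)"
    using assms by (simp add: expect_def mmult_def hermitian_on_cnj cong: sum.cong)
  also have "\<dots> = expect C \<sigma> X"
    unfolding expect_def mmult_def by (rule sum.swap)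
  finally show ?thesis by (metis Reals_cnj_iff)
qed

lemma psd_mmult_madj: "psd_on C (mmult C T (madj T))"
  unfolding psd_on_def
proof
  fix v :: "'a \<Rightarrow> complex"
  define w where "w z = (\<Sum>x\<in>C. cnj (v x) * T x z)" for z
  have "(\<Sum>x\<in>C. \<Sum>y\<in>C. cnj (v x) * mmult C T (madj T) x y * v y)
      = (\<Sum>x\<in>C. \<Sum>y\<in>C. \<Sum>z\<in>C. cnj (v x) * T x z * (cnj (T y z) * v y))"
    by (simp add: mmult_def madj_def sum_distrib_left sum_distrib_right mult.assoc)
  also have "\<dots> = (\<Sum>z\<in>C. \<Sum>x\<in>C. \<Sum>y\<in>C. cnj (v x) * T x z * (cnj (T y z) * v y))"
    by (rule sum_swap3)
  also have "\<dots> = (\<Sum>z\<in>C. w z * cnj (w z))"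
    unfolding w_def by (simp only: cnj_sum complex_cnj_mult complex_cnj_cnj sum_product)
      (simp add: ac_simps)
  also have "\<dots> = of_real (\<Sum>z\<in>C. (cmod (w z))\<^sup>2)"
    by (simp add: complex_norm_square del: of_real_power)
  finally show "0 \<le> Re (\<Sum>x\<in>C. \<Sum>y\<in>C. cnj (v x) * mmult C T (madj T) x y * v y)"
    by (simp add: sum_nonneg)
qed

lemma psd_expect_nonneg:
  assumes "psd_on C \<sigma>"
  shows "0 \<le> Re (expect C \<sigma> (mmult C M (madj M)))"
proof -
  have "expect C \<sigma> (mmult C M (madj M)) = (\<Sum>x\<in>C. \<Sum>y\<in>C. \<Sum>z\<in>C. cnj (M x z) * \<sigma> x y * M y z)"
    by (simp add: expect_def mmult_def madj_def sum_distrib_left ac_simps)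
  also have "\<dots> = (\<Sum>z\<in>C. \<Sum>x\<in>C. \<Sum>y\<in>C. cnj (M x z) * \<sigma> x y * M y z)"
    by (rule sum_swap3)
  finally have eq: "expect C \<sigma> (mmult C M (madj M)) = \<dots>" .
  have "0 \<le> (\<Sum>z\<in>C. Re (\<Sum>x\<in>C. \<Sum>y\<in>C. cnj (M x z) * \<sigma> x y * M y z))"
    using assms by (intro sum_nonneg) (simp add: psd_on_def)
  then show ?thesis
    unfolding eq by (simp only: Re_sum)
qed

lemma mmult_cong_right: "(\<And>y. y \<in> C \<Longrightarrow> Y y z = Y' y z) \<Longrightarrow> mmult C X Y x z = mmult C X Y' x z"
  by (simp add: mmult_def)

lemma hermitian_on_iff_madj: "hermitian_on C X \<longleftrightarrow> (\<forall>x\<in>C. \<forall>y\<in>C. madj X x y = X x y)"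
  unfolding hermitian_on_def madj_def by metis

lemma hermitian_on_congruence:
  assumes "hermitian_on C Z"
  shows "hermitian_on C (mmult C V (mmult C Z (madj V)))"
proof -
  have "madj (mmult C V (mmult C Z (madj V))) x y = mmult C V (mmult C Z (madj V)) x y"
    if "x \<in> C" "y \<in> C" for x y
  proof -
    have "madj (mmult C V (mmult C Z (madj V))) x y = mmult C V (mmult C (madj Z) (madj V)) x y"
      by (simp add: madj_mmult mmult_assoc)
    also have "\<dots> = mmult C V (mmult C Z (madj V)) x y"
      using assms by (intro mmult_cong refl) (simp add: hermitian_on_iff_madj cong: mmult_cong)
    finally show ?thesis .
  qed
  then show ?thesis by (simp add: hermitian_on_iff_madj)
qed

lemma unitary_on_ident: "finite C \<Longrightarrow> unitary_on C ident"
  by (simp add: unitary_on_def mmult_ident_left)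

lemma unitary_on_madj: "unitary_on C U \<Longrightarrow> unitary_on C (madj U)"
  by (simp add: unitary_on_def)

lemma unitary_on_mmult:
  assumes "finite C" "unitary_on C R" "unitary_on C U"
  shows "unitary_on C (mmult C R U)"
proof -
  have "mmult C (madj (mmult C R U)) (mmult C R U) x y = ident x y"
    and "mmult C (mmult C R U) (madj (mmult C R U)) x y = ident x y"
    if "x \<in> C" "y \<in> C" for x y
  proof -
    have "mmult C (madj (mmult C R U)) (mmult C R U) x y
        = mmult C (madj U) (mmult C (mmult C (madj R) R) U) x y"
      by (simp add: madj_mmult mmult_assoc)
    also have "\<dots> = mmult C (madj U) U x y"
      using assms by (intro mmult_cong refl) (simp add: unitary_on_def mmult_ident_left cong: mmult_cong)
    finally show "mmult C (madj (mmult C R U)) (mmult C R U) x y = ident x y"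
      using assms that by (simp add: unitary_on_def)
    have "mmult C (mmult C R U) (madj (mmult C R U)) x y
        = mmult C R (mmult C (mmult C U (madj U)) (madj R)) x y"
      by (simp add: madj_mmult mmult_assoc)
    also have "\<dots> = mmult C R (madj R) x y"
      using assms by (intro mmult_cong refl) (simp add: unitary_on_def mmult_ident_left cong: mmult_cong)
    finally show "mmult C (mmult C R U) (madj (mmult C R U)) x y = ident x y"
      using assms that by (simp add: unitary_on_def)
  qed
  then show ?thesis by (simp add: unitary_on_def)
qed

lemma unitary_cancel_left:
  assumes "finite C" "unitary_on C U" "x \<in> C"
  shows "mmult C (mmult C U (madj U)) R x z = R x z"
proof -
  have "mmult C (mmult C U (madj U)) R x z = mmult C ident R x z"
    using assms by (intro mmult_cong refl) (simp add: unitary_on_def)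
  then show ?thesis using assms by (simp add: mmult_ident_left)
qed

lemma unitary_cancel_right:
  assumes "finite C" "unitary_on C U" "z \<in> C"
  shows "mmult C R (mmult C U (madj U)) x z = R x z"
proof -
  have "mmult C R (mmult C U (madj U)) x z = mmult C R ident x z"
    using assms by (intro mmult_cong_right) (simp add: unitary_on_def)
  then show ?thesis using assms by (simp add: mmult_ident_right)
qed

definition in_basis :: "'a set \<Rightarrow> ('a \<Rightarrow> 'a \<Rightarrow> complex) \<Rightarrow> ('a \<Rightarrow> 'a \<Rightarrow> complex) \<Rightarrow> 'a \<Rightarrow> 'a \<Rightarrow> complex"
  where "in_basis C U Z = mmult C (madj U) (mmult C Z U)"

lemma hermitian_on_in_basis: "hermitian_on C Z \<Longrightarrow> hermitian_on C (in_basis C U Z)"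
  using hermitian_on_congruence[of C Z "madj U"] by (simp add: in_basis_def)

lemma in_basis_mmult:
  assumes fin: "finite C" and U: "unitary_on C U"
  shows "in_basis C U (mmult C P Q) = mmult C (in_basis C U P) (in_basis C U Q)"
proof (intro ext)
  fix k l
  have "mmult C (in_basis C U P) (in_basis C U Q) k l
      = mmult C (madj U) (mmult C P (mmult C (mmult C U (madj U)) (mmult C Q U))) k l"
    by (simp add: in_basis_def mmult_assoc)
  also have "\<dots> = mmult C (madj U) (mmult C P (mmult C Q U)) k l"
    by (intro mmult_cong_right unitary_cancel_left[OF fin U])
  also have "\<dots> = in_basis C U (mmult C P Q) k l"
    by (simp add: in_basis_def mmult_assoc)
  finally show "in_basis C U (mmult C P Q) k l = mmult C (in_basis C U P) (in_basis C U Q) k l" ..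
qed

lemma trace_mmult_commute: "(\<Sum>x\<in>C. mmult C P Q x x) = (\<Sum>x\<in>C. mmult C Q P x x)"
  unfolding mmult_def by (subst sum.swap) (simp add: mult.commute)

lemma expect_in_basis:
  assumes fin: "finite C" and U: "unitary_on C U"
  shows "expect C (in_basis C U \<sigma>) (in_basis C U Z) = expect C \<sigma> Z"
proof -
  have "expect C (in_basis C U \<sigma>) (in_basis C U Z) = (\<Sum>x\<in>C. mmult C (madj U) (mmult C (mmult C \<sigma> Z) U) x x)"
    unfolding expect_def in_basis_mmult[OF fin U, symmetric] by (simp add: in_basis_def)
  also have "\<dots> = (\<Sum>x\<in>C. mmult C (mmult C \<sigma> Z) (mmult C U (madj U)) x x)"
    by (simp only: trace_mmult_commute[of C "madj U"] mmult_assoc)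
  also have "\<dots> = expect C \<sigma> Z"
    using unitary_cancel_right[OF fin U] by (simp add: expect_def)
  finally show ?thesis .
qed

lemma in_basis_eigenvector:
  assumes fin: "finite C" and U: "unitary_on C U" and "k \<in> C" "l \<in> C"
    and ev: "\<And>x. x \<in> C \<Longrightarrow> mvec C H (\<lambda>y. U y l) x = of_real (lam l) * U x l"
  shows "in_basis C U H k l = of_real (lam l) * ident k l"
proof -
  have "in_basis C U H k l = (\<Sum>x\<in>C. madj U k x * mvec C H (\<lambda>y. U y l) x)"
    by (simp add: in_basis_def mmult_def mvec_def)
  also have "\<dots> = of_real (lam l) * mmult C (madj U) U k l"
    by (simp add: ev mmult_def sum_distrib_left ac_simps cong: sum.cong)
  also have "\<dots> = of_real (lam l) * ident k l"
    using U assms(3,4) by (simp add: unitary_on_def)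
  finally show ?thesis .
qed

lemma expect_eigenbasis:
  assumes fin: "finite C" and U: "unitary_on C U"
    and ev: "\<And>k x. k \<in> C \<Longrightarrow> x \<in> C \<Longrightarrow> mvec C \<rho> (\<lambda>y. U y k) x = of_real (lam k) * U x k"
  shows "expect C \<rho> Z = (\<Sum>k\<in>C. of_real (lam k) * in_basis C U Z k k)"
proof -
  have basis: "in_basis C U \<rho> k l = of_real (lam l) * ident k l" if "k \<in> C" "l \<in> C" for k l
    by (rule in_basis_eigenvector[where lam = lam, OF fin U that ev[OF that(2)]])
  have "expect C \<rho> Z = expect C (in_basis C U \<rho>) (in_basis C U Z)"
    by (rule expect_in_basis[OF fin U, symmetric])
  also have "\<dots> = (\<Sum>k\<in>C. \<Sum>l\<in>C. ident k l * (of_real (lam l) * in_basis C U Z l k))"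
    unfolding expect_def mmult_def by (intro sum.cong refl) (simp add: basis ac_simps)
  also have "\<dots> = (\<Sum>k\<in>C. of_real (lam k) * in_basis C U Z k k)"
    using fin by (intro sum.cong refl) (simp add: ident_mult)
  finally show ?thesis .
qed

lemma unitary_mvec_inverse:
  assumes "finite C" "unitary_on C U" "k \<in> C"
  shows "mvec C (madj U) (mvec C U c) k = c k"
proof -
  have "mvec C (madj U) (mvec C U c) k = mvec C (mmult C (madj U) U) c k"
    by (simp add: mvec_mmult)
  also have "\<dots> = mvec C ident c k"
    using assms by (intro mvec_cong refl) (simp add: unitary_on_def)
  finally show ?thesis using assms by (simp add: mvec_ident)
qed

lemma eigenvector_in_basis:
  assumes fin: "finite C" and U: "unitary_on C U" and "x \<in> C"
    and ev: "\<And>i. i \<in> C \<Longrightarrow> mvec C (in_basis C U H) c i = \<mu> * c i"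
  shows "mvec C H (mvec C U c) x = \<mu> * mvec C U c x"
proof -
  have "mvec C H (mvec C U c) x = mvec C (mmult C H U) c x"
    by (simp add: mvec_mmult)
  also have "\<dots> = mvec C (mmult C U (in_basis C U H)) c x"
    using unitary_cancel_left[OF fin U \<open>x \<in> C\<close>] by (intro mvec_cong refl) (simp add: in_basis_def mmult_assoc)
  also have "\<dots> = mvec C U (\<lambda>i. \<mu> * c i) x"
    unfolding mvec_mmult using ev by (intro mvec_cong refl) simp
  also have "\<dots> = \<mu> * mvec C U c x"
    by (simp add: mvec_def sum_distrib_left ac_simps)
  finally show ?thesis .
qed

definition mat_of_enum :: "(nat \<Rightarrow> 'a) \<Rightarrow> nat \<Rightarrow> ('a \<Rightarrow> 'a \<Rightarrow> complex) \<Rightarrow> complex mat"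
  where "mat_of_enum g n X = mat n n (\<lambda>(i, j). X (g i) (g j))"

lemma mat_of_enum_mmult:
  assumes g: "bij_betw g {0..<n} C"
  shows "mat_of_enum g n (mmult C X Y) = mat_of_enum g n X * mat_of_enum g n Y"
proof (rule eq_matI)
  fix i j assume "i < dim_row (mat_of_enum g n X * mat_of_enum g n Y)"
    and "j < dim_col (mat_of_enum g n X * mat_of_enum g n Y)"
  then have ij: "i < n" "j < n" by (simp_all add: mat_of_enum_def)
  have "mmult C X Y (g i) (g j) = (\<Sum>l\<in>{0..<n}. X (g i) (g l) * Y (g l) (g j))"
    unfolding mmult_def by (rule sum.reindex_bij_betw[OF g, symmetric])
  then show "mat_of_enum g n (mmult C X Y) $$ (i, j) = (mat_of_enum g n X * mat_of_enum g n Y) $$ (i, j)"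
    using ij by (simp add: mat_of_enum_def scalar_prod_def)
qed (simp_all add: mat_of_enum_def)

lemma mat_of_enum_eq_iff:
  assumes g: "bij_betw g {0..<n} C"
  shows "mat_of_enum g n X = mat_of_enum g n Y \<longleftrightarrow> (\<forall>x\<in>C. \<forall>y\<in>C. X x y = Y x y)"
proof
  assume eq: "mat_of_enum g n X = mat_of_enum g n Y"
  show "\<forall>x\<in>C. \<forall>y\<in>C. X x y = Y x y"
  proof (intro ballI)
    fix x y assume "x \<in> C" "y \<in> C"
    then obtain i j where "i < n" "j < n" "x = g i" "y = g j"
      using g by (auto simp: bij_betw_def)
    then show "X x y = Y x y"
      using arg_cong[OF eq, of "\<lambda>M. M $$ (i, j)"] by (simp add: mat_of_enum_def)
  qed
next
  assume "\<forall>x\<in>C. \<forall>y\<in>C. X x y = Y x y"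
  moreover have "g i \<in> C" if "i < n" for i
    using g that by (auto simp: bij_betw_def)
  ultimately show "mat_of_enum g n X = mat_of_enum g n Y"
    by (intro eq_matI) (simp_all add: mat_of_enum_def)
qed

lemma mat_of_enum_ident:
  assumes g: "bij_betw g {0..<n} C"
  shows "mat_of_enum g n ident = 1\<^sub>m n"
proof (rule eq_matI)
  fix i j assume "i < dim_row (1\<^sub>m n :: complex mat)" "j < dim_col (1\<^sub>m n :: complex mat)"
  then have "i < n" "j < n" by simp_all
  moreover have "g i = g j \<longleftrightarrow> i = j" if "i < n" "j < n"
    using g that by (auto simp: bij_betw_def inj_on_def)
  ultimately show "mat_of_enum g n ident $$ (i, j) = 1\<^sub>m n $$ (i, j)"
    by (simp add: mat_of_enum_def ident_def)
qed (simp_all add: mat_of_enum_def)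

lemma mmult_right_inverse:
  assumes "finite C" and XY: "\<forall>x\<in>C. \<forall>y\<in>C. mmult C X Y x y = ident x y"
  shows "\<forall>x\<in>C. \<forall>y\<in>C. mmult C Y X x y = ident x y"
proof -
  obtain g where g: "bij_betw g {0..<card C} C"
    using ex_bij_betw_nat_finite[OF \<open>finite C\<close>] by blast
  let ?M = "mat_of_enum g (card C)"
  have "?M (mmult C X Y) = ?M ident"
    unfolding mat_of_enum_eq_iff[OF g] by (rule XY)
  then have "?M X * ?M Y = 1\<^sub>m (card C)"
    by (simp only: mat_of_enum_mmult[OF g] mat_of_enum_ident[OF g])
  moreover have "?M Z \<in> carrier_mat (card C) (card C)" for Z
    by (simp add: mat_of_enum_def)
  ultimately have "?M Y * ?M X = 1\<^sub>m (card C)"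
    using mat_mult_left_right_inverse by blast
  then have "?M (mmult C Y X) = ?M ident"
    by (simp only: mat_of_enum_mmult[OF g] mat_of_enum_ident[OF g])
  then show ?thesis
    unfolding mat_of_enum_eq_iff[OF g] .
qed

lemma ex_eigenvector:
  fixes M :: "'a \<Rightarrow> 'a \<Rightarrow> complex"
  assumes "finite D" "D \<noteq> {}"
  obtains c \<mu> where "\<exists>i\<in>D. c i \<noteq> 0" "\<And>i. i \<in> D \<Longrightarrow> mvec D M c i = \<mu> * c i"
proof -
  define n where "n = card D"
  obtain g where g: "bij_betw g {0..<n} D"
    using ex_bij_betw_nat_finite[OF \<open>finite D\<close>] by (auto simp: n_def)
  have "n \<noteq> 0" using assms by (simp add: n_def)
  define A where "A = mat_of_enum g n M"
  have A: "A \<in> carrier_mat n n" by (simp add: A_def mat_of_enum_def)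
  obtain as where as: "char_poly A = (\<Prod>a\<leftarrow>as. [:- a, 1:])" "length as = n"
    using char_poly_factorized[OF A] by blast
  then obtain a rest where "as = a # rest" using \<open>n \<noteq> 0\<close> by (cases as) auto
  then have "eigenvalue A a"
    using eigenvalue_root_char_poly[OF A] as(1) by simp
  then obtain v where v: "v \<in> carrier_vec n" "v \<noteq> 0\<^sub>v n" "A *\<^sub>v v = a \<cdot>\<^sub>v v"
    using A unfolding eigenvalue_def eigenvector_def by blast
  have "\<exists>i<n. v $ i \<noteq> 0"
  proof (rule ccontr)
    assume "\<not> (\<exists>i<n. v $ i \<noteq> 0)"
    then have "v = 0\<^sub>v n" using v(1) by (intro eq_vecI) auto
    with v(2) show False by simp
  qed
  then obtain i0 where i0: "i0 < n" "v $ i0 \<noteq> 0" by blast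
  define c where "c x = v $ inv_into {0..<n} g x" for x
  have c_g: "c (g i) = v $ i" if "i < n" for i
    using g that by (simp add: c_def bij_betw_def)
  show thesis
  proof
    show "\<exists>i\<in>D. c i \<noteq> 0"
      using i0 c_g g by (intro bexI[of _ "g i0"]) (auto simp: bij_betw_def)
  next
    fix x assume "x \<in> D"
    then obtain i where i: "i < n" "x = g i" using g by (auto simp: bij_betw_def)
    have "mvec D M c x = (\<Sum>l\<in>{0..<n}. M (g i) (g l) * c (g l))"
      unfolding mvec_def i(2) by (rule sum.reindex_bij_betw[OF g, symmetric])
    also have "\<dots> = (A *\<^sub>v v) $ i"
      using i v(1) c_g by (simp add: A_def mat_of_enum_def scalar_prod_def)
    also have "\<dots> = a * c x"
      using i v c_g by simp
    finally show "mvec D M c x = a * c x" .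
  qed
qed

lemma cinner_mvec_hermitian_real:
  assumes "hermitian_on C H"
  shows "cinner C w (mvec C H w) \<in> \<real>"
proof -
  have "cnj (cinner C w (mvec C H w)) = (\<Sum>x\<in>C. \<Sum>y\<in>C. w x * (H y x * cnj (w y)))"
    using assms by (simp add: cinner_def mvec_def sum_distrib_left hermitian_on_cnj cong: sum.cong)
  also have "\<dots> = (\<Sum>y\<in>C. \<Sum>x\<in>C. cnj (w y) * (H y x * w x))"
    by (subst sum.swap) (simp add: ac_simps)
  also have "\<dots> = cinner C w (mvec C H w)"
    by (simp add: cinner_def mvec_def sum_distrib_left)
  finally show ?thesis by (metis Reals_cnj_iff)
qed

lemma hermitian_eigenvalue_real:
  assumes "finite C" "hermitian_on C H" "x0 \<in> C" "w x0 \<noteq> 0"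
    and ev: "\<And>x. x \<in> C \<Longrightarrow> mvec C H w x = \<mu> * w x"
  shows "\<mu> \<in> \<real>"
proof -
  define p where "p = (\<Sum>x\<in>C. (cmod (w x))\<^sup>2)"
  have "p > 0" unfolding p_def using assms by (intro cinner_self_pos)
  have "cinner C w (mvec C H w) = cinner C w (\<lambda>x. \<mu> * w x)"
    using ev by (simp add: cinner_def)
  also have "\<dots> = \<mu> * of_real p"
    by (simp add: cinner_smult_right cinner_self p_def)
  finally have "\<mu> * of_real p \<in> \<real>"
    using cinner_mvec_hermitian_real[OF assms(2), of w] by simp
  then have "\<mu> * of_real p / of_real p \<in> \<real>"
    by (intro Reals_divide) auto
  then show ?thesis
    using \<open>p > 0\<close> by simp
qed

lemma ex_eigenvector_vanishing:
  assumes fin: "finite C" and K: "K \<subseteq> C" "k0 \<in> C" "k0 \<notin> K"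
    and rows: "\<And>k j. k \<in> K \<Longrightarrow> j \<in> C \<Longrightarrow> j \<notin> K \<Longrightarrow> T k j = 0"
  obtains c \<mu> where "\<exists>i\<in>C. c i \<noteq> 0" "\<And>i. i \<in> K \<Longrightarrow> c i = 0"
    "\<And>i. i \<in> C \<Longrightarrow> mvec C T c i = \<mu> * c i"
proof -
  define D where "D = C - K"
  have "finite D" "D \<noteq> {}" using fin K by (auto simp: D_def)
  then obtain c \<mu> where c0: "\<exists>i\<in>D. c i \<noteq> 0" and c_ev: "\<And>i. i \<in> D \<Longrightarrow> mvec D T c i = \<mu> * c i"
    using ex_eigenvector[of D T] by blast
  define c' where "c' i = (if i \<in> D then c i else 0)" for i
  have mvec_c': "mvec C T c' i = mvec D T c i" for i
  proof -
    have "mvec C T c' i = (\<Sum>j\<in>C. if j \<in> D then T i j * c j else 0)"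
      unfolding mvec_def c'_def by (intro sum.cong) auto
    also have "\<dots> = mvec D T c i"
      using fin by (simp add: sum.inter_filter mvec_def D_def Diff_eq Int_def)
    finally show ?thesis .
  qed
  show thesis
  proof
    show "\<exists>i\<in>C. c' i \<noteq> 0" using c0 by (auto simp: c'_def D_def)
    show "c' i = 0" if "i \<in> K" for i using that by (simp add: c'_def D_def)
    fix i assume "i \<in> C"
    show "mvec C T c' i = \<mu> * c' i"
    proof (cases "i \<in> D")
      case True
      then show ?thesis using c_ev mvec_c' by (simp add: c'_def)
    next
      case False
      with \<open>i \<in> C\<close> have "mvec D T c i = 0"
        using rows by (auto simp: mvec_def D_def intro!: sum.neutral)
      then show ?thesis using False mvec_c' by (simp add: c'_def)
    qed
  qed
qed

lemma ex_eigenvector_orthogonal: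
  assumes fin: "finite C" and herm: "hermitian_on C H" and U: "unitary_on C U"
    and K: "K \<subseteq> C" "k0 \<in> C" "k0 \<notin> K"
    and ev: "\<And>k x. k \<in> K \<Longrightarrow> x \<in> C \<Longrightarrow> mvec C H (\<lambda>y. U y k) x = of_real (lam k) * U x k"
  obtains w \<mu> where "\<exists>x\<in>C. w x \<noteq> 0" "\<And>x. x \<in> C \<Longrightarrow> mvec C H w x = \<mu> * w x"
    "\<And>k. k \<in> K \<Longrightarrow> cinner C (\<lambda>x. U x k) w = 0"
proof -
  let ?T = "in_basis C U H"
  have "?T k j = 0" if "k \<in> K" "j \<in> C" "j \<notin> K" for k j
  proof -
    have "k \<in> C" using that K by blast
    then have "?T k j = cnj (?T j k)"
      using hermitian_on_cnj[OF hermitian_on_in_basis[OF herm, of U] \<open>j \<in> C\<close>] by simp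
    also have "?T j k = of_real (lam k) * ident j k"
      by (rule in_basis_eigenvector[where lam = lam, OF fin U \<open>j \<in> C\<close> \<open>k \<in> C\<close> ev[OF \<open>k \<in> K\<close>]])
    finally show ?thesis using that by (auto simp: ident_def)
  qed
  then obtain c \<mu> where c0: "\<exists>i\<in>C. c i \<noteq> 0" and c_K: "\<And>i. i \<in> K \<Longrightarrow> c i = 0"
    and c_ev: "\<And>i. i \<in> C \<Longrightarrow> mvec C ?T c i = \<mu> * c i"
    using ex_eigenvector_vanishing[OF fin K] by blast
  show thesis
  proof
    obtain i where "i \<in> C" "c i \<noteq> 0" using c0 by blast
    then have "mvec C (madj U) (mvec C U c) i \<noteq> 0"
      using unitary_mvec_inverse[OF fin U] by simp
    then show "\<exists>x\<in>C. mvec C U c x \<noteq> 0"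
      by (auto simp: mvec_def intro: sum.neutral)
    show "mvec C H (mvec C U c) x = \<mu> * mvec C U c x" if "x \<in> C" for x
      using eigenvector_in_basis[OF fin U that c_ev] .
    show "cinner C (\<lambda>x. U x k) (mvec C U c) = 0" if "k \<in> K" for k
      using unitary_mvec_inverse[OF fin U, of k c] c_K[OF that] that K
      by (auto simp: cinner_def mvec_def madj_def)
  qed
qed

lemma ex_unit_rescaling:
  assumes "finite C" "x0 \<in> C" "w x0 \<noteq> 0"
  obtains s where "cinner C (\<lambda>x. s * w x) (\<lambda>x. s * w x) = 1" "cinner C (\<lambda>x. s * w x) a \<in> \<real>"
proof -
  define p where "p = (\<Sum>x\<in>C. (cmod (w x))\<^sup>2)"
  have "p > 0" unfolding p_def using assms by (intro cinner_self_pos)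
  define z where "z = cinner C w a"
  define \<beta> where "\<beta> = (if z = 0 then 1 else z / of_real (cmod z))"
  have zz: "cnj z * z = of_real (cmod z) * of_real (cmod z)"
    by (metis complex_norm_square mult.commute of_real_mult power2_eq_square)
  have \<beta>: "cnj \<beta> * \<beta> = 1" "cnj \<beta> * z = of_real (cmod z)"
    using zz by (auto simp: \<beta>_def)
  define s where "s = of_real (1 / sqrt p) * \<beta>"
  show thesis
  proof
    have "cinner C (\<lambda>x. s * w x) (\<lambda>x. s * w x) = cnj s * (s * cinner C w w)"
      by (simp only: cinner_smult_left cinner_smult_right)
    also have "\<dots> = (cnj s * s) * of_real p"
      unfolding cinner_self p_def[symmetric] by (simp only: mult.assoc)
    also have "cnj s * s = of_real ((1 / sqrt p)\<^sup>2) * (cnj \<beta> * \<beta>)"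
      unfolding s_def by (simp only: complex_cnj_mult complex_cnj_complex_of_real of_real_mult
          power2_eq_square mult_ac)
    also have "(1 / sqrt p)\<^sup>2 = 1 / p"
      using \<open>p > 0\<close> by (simp add: power_divide)
    finally show "cinner C (\<lambda>x. s * w x) (\<lambda>x. s * w x) = 1"
      using \<open>p > 0\<close> \<beta>(1) by simp
    have "cinner C (\<lambda>x. s * w x) a = of_real (1 / sqrt p) * (cnj \<beta> * z)"
      by (simp only: cinner_smult_left s_def z_def complex_cnj_mult complex_cnj_complex_of_real mult.assoc)
    then have "cinner C (\<lambda>x. s * w x) a = of_real (1 / sqrt p * cmod z)"
      using \<beta>(2) by simp
    then show "cinner C (\<lambda>x. s * w x) a \<in> \<real>" by simp
  qed
qed

definition reflection :: "'a set \<Rightarrow> ('a \<Rightarrow> complex) \<Rightarrow> 'a \<Rightarrow> 'a \<Rightarrow> complex"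
  where "reflection C u x y = ident x y - of_real (2 / (\<Sum>z\<in>C. (cmod (u z))\<^sup>2)) * cnj (u y) * u x"

lemma reflection_eq: "reflection C u = (\<lambda>x y. ident x y - (of_real (2 / q) * cnj (u y)) * u x)"
  if "q = (\<Sum>z\<in>C. (cmod (u z))\<^sup>2)"
  using that by (simp add: reflection_def fun_eq_iff)

lemma mvec_reflection:
  assumes "finite C" "x \<in> C"
  shows "mvec C (reflection C u) v x = v x - of_real (2 / (\<Sum>z\<in>C. (cmod (u z))\<^sup>2)) * cinner C u v * u x"
proof -
  define q where "q = (\<Sum>z\<in>C. (cmod (u z))\<^sup>2)"
  show ?thesis
    unfolding reflection_eq[OF q_def] q_def[symmetric] using assms
    by (simp add: mvec_def cinner_def ident_mult sum_subtractf sum_distrib_left algebra_simps)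
qed

lemma unitary_on_reflection:
  assumes fin: "finite C" and "x0 \<in> C" "u x0 \<noteq> 0"
  shows "unitary_on C (reflection C u)"
proof -
  define q where "q = (\<Sum>z\<in>C. (cmod (u z))\<^sup>2)"
  have "q > 0" unfolding q_def using assms by (rule cinner_self_pos)
  note R = reflection_eq[OF q_def]
  have "madj (reflection C u) = reflection C u"
    by (simp add: R madj_def ident_def fun_eq_iff mult.commute mult.left_commute)
  moreover have "mmult C (reflection C u) (reflection C u) x y = ident x y" if "x \<in> C" "y \<in> C" for x y
  proof -
    have "cinner C u (\<lambda>z. reflection C u z y)
        = cinner C u (\<lambda>z. ident z y) - of_real (2 / q) * cnj (u y) * cinner C u u"
      unfolding R by (simp only: cinner_diff_right cinner_smult_right)
    also have "\<dots> = - cnj (u y)"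
      using fin that \<open>q > 0\<close> by (simp add: cinner_self q_def[symmetric] cinner_def ident_mult)
    finally have col: "cinner C u (\<lambda>z. reflection C u z y) = - cnj (u y)" .
    have "mmult C (reflection C u) (reflection C u) x y = mvec C (reflection C u) (\<lambda>z. reflection C u z y) x"
      by (simp add: mmult_def mvec_def)
    also have "\<dots> = reflection C u x y - of_real (2 / q) * cinner C u (\<lambda>z. reflection C u z y) * u x"
      unfolding mvec_reflection[OF fin \<open>x \<in> C\<close>] q_def[symmetric] ..
    also have "\<dots> = ident x y"
      unfolding col by (simp add: R)
    finally show ?thesis .
  qed
  ultimately show ?thesis by (simp add: unitary_on_def)
qed

lemma householder_reflection:
  assumes fin: "finite C" and a: "cinner C a a = 1" and b: "cinner C b b = 1"
    and ab: "cinner C a b \<in> \<real>"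
  obtains R where "unitary_on C R" "\<And>x. x \<in> C \<Longrightarrow> mvec C R a x = b x"
    "\<And>v x. cinner C a v = 0 \<Longrightarrow> cinner C b v = 0 \<Longrightarrow> x \<in> C \<Longrightarrow> mvec C R v x = v x"
proof (cases "\<forall>x\<in>C. a x = b x")
  case True
  then show thesis
    using that[of ident] fin by (simp add: unitary_on_ident mvec_ident)
next
  case False
  define u where "u = (\<lambda>x. a x - b x)"
  define q where "q = (\<Sum>x\<in>C. (cmod (u x))\<^sup>2)"
  from False obtain x0 where "x0 \<in> C" "u x0 \<noteq> 0" by (auto simp: u_def)
  then have "q > 0" unfolding q_def using fin by (intro cinner_self_pos)
  define t where "t = cinner C a b"
  have ba: "cinner C b a = t"
    using ab by (metis Reals_cnj_iff cnj_cinner t_def)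
  have ua: "cinner C u a = 1 - t"
    using a ba by (simp add: u_def cinner_diff_left)
  have "cinner C u u = 2 - 2 * t"
    using a b ba by (simp add: u_def t_def cinner_diff_left cinner_diff_right)
  then have uu: "of_real q = 2 - 2 * t"
    by (simp add: q_def cinner_self)
  show thesis
  proof (rule that[OF unitary_on_reflection[where u = u, OF fin \<open>x0 \<in> C\<close> \<open>u x0 \<noteq> 0\<close>]])
    fix x assume "x \<in> C"
    have "mvec C (reflection C u) a x = a x - of_real (2 / q) * (1 - t) * u x"
      unfolding mvec_reflection[OF fin \<open>x \<in> C\<close>] q_def[symmetric] ua ..
    also have "of_real (2 / q) * (1 - t) = 1"
      using uu \<open>q > 0\<close> by (simp add: field_simps)
    finally show "mvec C (reflection C u) a x = b x"
      by (simp add: u_def)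
  next
    fix v x assume "cinner C a v = 0" "cinner C b v = 0" "x \<in> C"
    then show "mvec C (reflection C u) v x = v x"
      using fin by (simp add: mvec_reflection u_def cinner_diff_left)
  qed
qed

lemma ex_unit_eigenvector_orthogonal:
  assumes fin: "finite C" and herm: "hermitian_on C H" and U: "unitary_on C U"
    and K: "K \<subseteq> C" "k0 \<in> C" "k0 \<notin> K"
    and ev: "\<And>k x. k \<in> K \<Longrightarrow> x \<in> C \<Longrightarrow> mvec C H (\<lambda>y. U y k) x = of_real (lam k) * U x k"
  obtains b \<nu> where "cinner C b b = 1" "cinner C (\<lambda>x. U x k0) b \<in> \<real>"
    "\<And>x. x \<in> C \<Longrightarrow> mvec C H b x = of_real \<nu> * b x" "\<And>k. k \<in> K \<Longrightarrow> cinner C b (\<lambda>x. U x k) = 0"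
proof -
  obtain w \<mu> where w0: "\<exists>x\<in>C. w x \<noteq> 0" and w_ev: "\<And>x. x \<in> C \<Longrightarrow> mvec C H w x = \<mu> * w x"
    and w_orth: "\<And>k. k \<in> K \<Longrightarrow> cinner C (\<lambda>x. U x k) w = 0"
    using ex_eigenvector_orthogonal[OF fin herm U K ev] by blast
  then obtain x0 where x0: "x0 \<in> C" "w x0 \<noteq> 0" by blast
  have \<mu>: "\<mu> = of_real (Re \<mu>)"
    using hermitian_eigenvalue_real[OF fin herm x0 w_ev] by (simp add: Reals_cnj_iff complex_eq_iff)
  obtain s where b1: "cinner C (\<lambda>x. s * w x) (\<lambda>x. s * w x) = 1"
    and ba: "cinner C (\<lambda>x. s * w x) (\<lambda>x. U x k0) \<in> \<real>"
    using ex_unit_rescaling[of C x0 w "\<lambda>x. U x k0"] fin x0 by blast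
  show thesis
  proof
    show "cinner C (\<lambda>x. s * w x) (\<lambda>x. s * w x) = 1" by (rule b1)
    show "cinner C (\<lambda>x. U x k0) (\<lambda>x. s * w x) \<in> \<real>"
      using ba by (metis Reals_cnj_iff cnj_cinner)
    show "mvec C H (\<lambda>x. s * w x) x = of_real (Re \<mu>) * (s * w x)" if "x \<in> C" for x
    proof -
      have "mvec C H (\<lambda>x. s * w x) x = s * mvec C H w x"
        by (simp add: mvec_def sum_distrib_left ac_simps)
      then show ?thesis using w_ev[OF that] \<mu> by simp
    qed
    show "cinner C (\<lambda>x. s * w x) (\<lambda>x. U x k) = 0" if "k \<in> K" for k
      using w_orth[OF that] cnj_cinner[of C w "\<lambda>x. U x k"] by (simp add: cinner_smult_left)
  qed
qed

lemma spectral_step: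
  assumes fin: "finite C" and herm: "hermitian_on C H" and U: "unitary_on C U"
    and K: "K \<subseteq> C" "k0 \<in> C" "k0 \<notin> K"
    and ev: "\<And>k x. k \<in> K \<Longrightarrow> x \<in> C \<Longrightarrow> mvec C H (\<lambda>y. U y k) x = of_real (lam k) * U x k"
  obtains U' lam' where "unitary_on C U'"
    "\<And>k x. k \<in> insert k0 K \<Longrightarrow> x \<in> C \<Longrightarrow> mvec C H (\<lambda>y. U' y k) x = of_real (lam' k) * U' x k"
proof -
  define a where "a = (\<lambda>x. U x k0)"
  obtain b \<nu> where b1: "cinner C b b = 1" and ab: "cinner C a b \<in> \<real>"
    and b_ev: "\<And>x. x \<in> C \<Longrightarrow> mvec C H b x = of_real \<nu> * b x"
    and b_orth: "\<And>k. k \<in> K \<Longrightarrow> cinner C b (\<lambda>x. U x k) = 0"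
    using ex_unit_eigenvector_orthogonal[OF fin herm U K ev] unfolding a_def by blast
  have a_col: "cinner C a (\<lambda>x. U x k) = ident k0 k" if "k \<in> C" for k
    using U \<open>k0 \<in> C\<close> that by (simp add: a_def cinner_columns unitary_on_def)
  obtain R where R: "unitary_on C R" and R_a: "\<And>x. x \<in> C \<Longrightarrow> mvec C R a x = b x"
    and R_fix: "\<And>v x. cinner C a v = 0 \<Longrightarrow> cinner C b v = 0 \<Longrightarrow> x \<in> C \<Longrightarrow> mvec C R v x = v x"
  proof -
    have "cinner C a a = 1"
      using a_col[OF \<open>k0 \<in> C\<close>] unfolding a_def by (simp add: ident_def)
    then show ?thesis using householder_reflection[OF fin _ b1 ab] that by blast
  qed
  define U' where "U' = mmult C R U"
  have U'_col: "U' y k = mvec C R (\<lambda>x. U x k) y" for y k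
    by (simp add: U'_def mmult_def mvec_def)
  show thesis
  proof (rule that[of U' "lam(k0 := \<nu>)"])
    show "unitary_on C U'"
      unfolding U'_def by (rule unitary_on_mmult[OF fin R U])
  next
    fix k x assume k: "k \<in> insert k0 K" and x: "x \<in> C"
    have "U' y k = (if k = k0 then b y else U y k)" if "y \<in> C" for y
      using k K that R_a R_fix[OF _ b_orth] a_col by (auto simp: U'_col a_def ident_def)
    then have "mvec C H (\<lambda>y. U' y k) x = mvec C H (\<lambda>y. if k = k0 then b y else U y k) x"
      by (intro mvec_cong) simp_all
    then show "mvec C H (\<lambda>y. U' y k) x = of_real ((lam(k0 := \<nu>)) k) * U' x k"
      using k x b_ev ev \<open>\<And>y. y \<in> C \<Longrightarrow> U' y k = _\<close>[OF x] by (cases "k = k0") auto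
  qed
qed

theorem hermitian_spectral:
  assumes "finite C" "hermitian_on C H"
  obtains U lam where "unitary_on C U"
    "\<And>k x. k \<in> C \<Longrightarrow> x \<in> C \<Longrightarrow> mvec C H (\<lambda>y. U y k) x = of_real (lam k) * U x k"
proof -
  have "\<exists>U lam. unitary_on C U \<and> (\<forall>k\<in>K. \<forall>x\<in>C. mvec C H (\<lambda>y. U y k) x = of_real (lam k) * U x k)"
    if "finite K" "K \<subseteq> C" for K
    using that
  proof (induction K rule: finite_induct)
    case empty
    show ?case using unitary_on_ident[OF assms(1)] by blast
  next
    case (insert k0 K)
    then have "K \<subseteq> C" "k0 \<in> C" by auto
    with insert.IH obtain U lam where U: "unitary_on C U"
      and ev: "\<forall>k\<in>K. \<forall>x\<in>C. mvec C H (\<lambda>y. U y k) x = of_real (lam k) * U x k"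
      by blast
    have ev': "\<And>k x. k \<in> K \<Longrightarrow> x \<in> C \<Longrightarrow> mvec C H (\<lambda>y. U y k) x = of_real (lam k) * U x k"
      using ev by blast
    obtain U' lam' where "unitary_on C U'"
      "\<And>k x. k \<in> insert k0 K \<Longrightarrow> x \<in> C \<Longrightarrow> mvec C H (\<lambda>y. U' y k) x = of_real (lam' k) * U' x k"
      using spectral_step[OF assms U \<open>K \<subseteq> C\<close> \<open>k0 \<in> C\<close> insert.hyps(2) ev'] by blast
    then show ?case by blast
  qed
  from this[OF assms(1) subset_refl] obtain U lam where "unitary_on C U"
    and "\<forall>k\<in>C. \<forall>x\<in>C. mvec C H (\<lambda>y. U y k) x = of_real (lam k) * U x k"
    by blast
  then show thesis by (intro that[of U lam]) simp_all
qed

lemma eigenbasis_expansion: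
  assumes fin: "finite C" and U: "unitary_on C U"
    and ev: "\<And>k x. k \<in> C \<Longrightarrow> x \<in> C \<Longrightarrow> mvec C H (\<lambda>y. U y k) x = of_real (lam k) * U x k"
    and "x \<in> C" "y \<in> C"
  shows "H x y = (\<Sum>k\<in>C. of_real (lam k) * U x k * cnj (U y k))"
proof -
  have "mmult C H (mmult C U (madj U)) x y = mmult C H ident x y"
    using U \<open>y \<in> C\<close> by (intro mmult_cong refl) (simp add: unitary_on_def)
  then have "H x y = mmult C H (mmult C U (madj U)) x y"
    using fin \<open>y \<in> C\<close> by (simp add: mmult_ident_right)
  also have "\<dots> = mmult C (mmult C H U) (madj U) x y"
    by (simp add: mmult_assoc)
  also have "\<dots> = (\<Sum>k\<in>C. mvec C H (\<lambda>y. U y k) x * cnj (U y k))"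
    by (simp add: mmult_def madj_def mvec_def)
  also have "\<dots> = (\<Sum>k\<in>C. of_real (lam k) * U x k * cnj (U y k))"
    using \<open>x \<in> C\<close> by (intro sum.cong refl) (simp add: ev)
  finally show ?thesis .
qed

lemma psd_eigenvalue_nonneg:
  assumes "psd_on C H" "unitary_on C U" "k \<in> C"
    and ev: "\<And>x. x \<in> C \<Longrightarrow> mvec C H (\<lambda>y. U y k) x = of_real (lam k) * U x k"
  shows "0 \<le> lam k"
proof -
  have "(\<Sum>x\<in>C. \<Sum>y\<in>C. cnj (U x k) * H x y * U y k) = (\<Sum>x\<in>C. cnj (U x k) * mvec C H (\<lambda>y. U y k) x)"
    by (simp add: mvec_def sum_distrib_left mult.assoc)
  also have "\<dots> = of_real (lam k) * mmult C (madj U) U k k"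
    using ev by (simp add: mmult_def madj_def sum_distrib_left ac_simps)
  also have "\<dots> = of_real (lam k)"
    using assms(2,3) by (simp add: unitary_on_def ident_def)
  finally have "(\<Sum>x\<in>C. \<Sum>y\<in>C. cnj (U x k) * H x y * U y k) = of_real (lam k)" .
  moreover have "0 \<le> Re (\<Sum>x\<in>C. \<Sum>y\<in>C. cnj (U x k) * H x y * U y k)"
    using assms(1) by (simp add: psd_on_def)
  ultimately show ?thesis by simp
qed

lemma psd_hermitian_factor:
  assumes fin: "finite C" and "hermitian_on C H" "psd_on C H"
  obtains R where "\<And>x y. x \<in> C \<Longrightarrow> y \<in> C \<Longrightarrow> H x y = mmult C R (madj R) x y"
proof -
  obtain U lam where U: "unitary_on C U"
    and ev: "\<And>k x. k \<in> C \<Longrightarrow> x \<in> C \<Longrightarrow> mvec C H (\<lambda>y. U y k) x = of_real (lam k) * U x k"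
    using hermitian_spectral[OF assms(1,2)] by blast
  define R where "R x k = U x k * of_real (sqrt (lam k))" for x k
  show thesis
  proof
    fix x y assume "x \<in> C" "y \<in> C"
    have "H x y = (\<Sum>k\<in>C. of_real (lam k) * U x k * cnj (U y k))"
      using fin U ev \<open>x \<in> C\<close> \<open>y \<in> C\<close> by (rule eigenbasis_expansion)
    also have "\<dots> = mmult C R (madj R) x y"
      unfolding mmult_def madj_def R_def
    proof (intro sum.cong refl)
      fix k assume "k \<in> C"
      then have "sqrt (lam k) * sqrt (lam k) = lam k"
        using psd_eigenvalue_nonneg[where lam = lam, OF \<open>psd_on C H\<close> U \<open>k \<in> C\<close> ev[OF \<open>k \<in> C\<close>]]
        by simp
      then have lam_sqrt: "of_real (lam k) = of_real (sqrt (lam k)) * (of_real (sqrt (lam k)) :: complex)"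
        by (metis of_real_mult)
      show "of_real (lam k) * U x k * cnj (U y k)
          = U x k * of_real (sqrt (lam k)) * cnj (U y k * of_real (sqrt (lam k)))"
        unfolding lam_sqrt by (simp only: complex_cnj_mult complex_cnj_complex_of_real mult_ac)
    qed
    finally show "H x y = mmult C R (madj R) x y" .
  qed
qed

definition fisher_witness :: "'a set \<Rightarrow> ('a \<Rightarrow> 'a \<Rightarrow> complex) \<Rightarrow> ('a \<Rightarrow> 'a \<Rightarrow> complex) \<Rightarrow> 'a \<Rightarrow> 'a \<Rightarrow> complex"
  where "fisher_witness C A X = (\<lambda>x y. 2 * \<i> * (mmult C A X x y - mmult C X A x y) - mmult C X X x y)"

lemma in_basis_fisher_witness:
  assumes "finite C" "unitary_on C U"
  shows "in_basis C U (fisher_witness C A X) = fisher_witness C (in_basis C U A) (in_basis C U X)"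
proof -
  have lin: "in_basis C U (\<lambda>x y. a * (P x y - Q x y) - R x y)
      = (\<lambda>x y. a * (in_basis C U P x y - in_basis C U Q x y) - in_basis C U R x y)" for a P Q R
    by (simp add: in_basis_def mmult_diff_left mmult_diff_right mmult_smult_left mmult_smult_right)
  show ?thesis
    unfolding fisher_witness_def lin in_basis_mmult[OF assms] ..
qed

lemma expect_fisher_witness_le:
  fixes c :: real
  assumes fin: "finite C" and A: "hermitian_on C A" and X: "hermitian_on C X" and \<sigma>: "psd_on C \<sigma>"
  defines "B \<equiv> \<lambda>x y. A x y - of_real c * ident x y"
  shows "Re (expect C \<sigma> (fisher_witness C A X)) \<le> 4 * Re (expect C \<sigma> (mmult C B B))"
proof -
  define M where "M x y = 2 * B x y + \<i> * X x y" for x y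
  have madj_M: "madj M x y = 2 * B x y - \<i> * X x y" if "x \<in> C" "y \<in> C" for x y
    using A X that by (simp add: M_def B_def madj_def ident_def hermitian_on_cnj)
  have BX: "mmult C B X x z = mmult C A X x z - of_real c * X x z" if "x \<in> C" for x z
    using fin that by (simp add: B_def mmult_diff_left mmult_smult_left mmult_ident_left)
  have XB: "mmult C X B x z = mmult C X A x z - of_real c * X x z" if "z \<in> C" for x z
    using fin that by (simp add: B_def mmult_diff_right mmult_smult_right mmult_ident_right)
  have MM: "mmult C M (madj M) x z = 4 * mmult C B B x z - fisher_witness C A X x z"
    if "x \<in> C" "z \<in> C" for x z
  proof -
    have "mmult C M (madj M) x z = mmult C M (\<lambda>y z. 2 * B y z - \<i> * X y z) x z"
      using madj_M that by (intro mmult_cong_right) simp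
    also have "\<dots> = 2 * (2 * mmult C B B x z - \<i> * mmult C B X x z)
        + \<i> * (2 * mmult C X B x z - \<i> * mmult C X X x z)"
      unfolding M_def mmult_add_left mmult_diff_right mmult_smult_left mmult_smult_right
      by (simp add: algebra_simps)
    also have "\<dots> = 4 * mmult C B B x z - fisher_witness C A X x z"
      using that by (simp add: BX XB fisher_witness_def algebra_simps)
    finally show ?thesis .
  qed
  have "expect C \<sigma> (fisher_witness C A X)
      = expect C \<sigma> (\<lambda>x z. 4 * mmult C B B x z - mmult C M (madj M) x z)"
    using MM by (intro expect_cong) simp
  also have "\<dots> = 4 * expect C \<sigma> (mmult C B B) - expect C \<sigma> (mmult C M (madj M))"
    by (simp add: expect_diff expect_smult)
  finally show ?thesis
    using psd_expect_nonneg[OF \<sigma>, of M] by simp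
qed

lemma sld_pair_identity:
  fixes a :: complex and p q :: real
  assumes "p + q > 0"
  defines "Lpq \<equiv> 2 * \<i> * of_real ((p - q) / (p + q)) * a"
    and "Lqp \<equiv> 2 * \<i> * of_real ((q - p) / (q + p)) * cnj a"
  shows "of_real p * (2 * \<i> * (a * Lqp - Lpq * cnj a) - Lpq * Lqp)
       + of_real q * (2 * \<i> * (cnj a * Lpq - Lqp * a) - Lqp * Lpq)
       = 4 * of_real ((p - q)\<^sup>2 / (p + q) * (cmod a)\<^sup>2)"
proof -
  define s where "s = (p - q) / (p + q)"
  have s_swap: "(q - p) / (q + p) = - s"
    by (simp add: s_def add.commute minus_divide_left)
  define n where "n = (cmod a)\<^sup>2"
  have aa: "a * cnj a = of_real n"
    unfolding n_def by (rule complex_norm_square[symmetric])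
  have "of_real p * (2 * \<i> * (a * Lqp - Lpq * cnj a) - Lpq * Lqp)
       + of_real q * (2 * \<i> * (cnj a * Lpq - Lqp * a) - Lqp * Lpq)
     = of_real p * (2 * \<i> * (- 2 * \<i> * of_real s * (a * cnj a) - 2 * \<i> * of_real s * (a * cnj a))
         - (2 * \<i>) * (- 2 * \<i>) * of_real s * of_real s * (a * cnj a))
       + of_real q * (2 * \<i> * (2 * \<i> * of_real s * (a * cnj a) + 2 * \<i> * of_real s * (a * cnj a))
         - (2 * \<i>) * (- 2 * \<i>) * of_real s * of_real s * (a * cnj a))"
    unfolding Lpq_def Lqp_def s_swap s_def[symmetric] by (simp add: algebra_simps)
  also have "\<dots> = of_real ((8 * s * (p - q) - 4 * s * (s * (p + q))) * n)"
    unfolding aa by (simp add: algebra_simps)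
  also have "s * (p + q) = p - q"
    using assms by (simp add: s_def)
  also have "(8 * s * (p - q) - 4 * s * (p - q)) * n = 4 * ((p - q)\<^sup>2 / (p + q) * n)"
    by (simp add: s_def power2_eq_square algebra_simps)
  finally show ?thesis by (simp add: n_def)
qed

definition sld :: "('a \<Rightarrow> real) \<Rightarrow> ('a \<Rightarrow> 'a \<Rightarrow> complex) \<Rightarrow> 'a \<Rightarrow> 'a \<Rightarrow> complex"
  where "sld lam Ah k l =
    (if lam k + lam l > 0 then 2 * \<i> * of_real ((lam k - lam l) / (lam k + lam l)) * Ah k l else 0)"

lemma hermitian_on_sld:
  assumes "hermitian_on C Ah"
  shows "hermitian_on C (sld lam Ah)"
  unfolding hermitian_on_def
proof (intro ballI)
  fix k l assume "k \<in> C" "l \<in> C"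
  have "(lam l - lam k) / (lam l + lam k) = - ((lam k - lam l) / (lam k + lam l))"
    by (simp add: add.commute minus_divide_left)
  then show "sld lam Ah l k = cnj (sld lam Ah k l)"
    using hermitian_on_cnj[OF assms \<open>k \<in> C\<close> \<open>l \<in> C\<close>] by (simp add: sld_def add.commute)
qed

lemma fisher_witness_cong:
  assumes "\<And>x y. x \<in> C \<Longrightarrow> y \<in> C \<Longrightarrow> X x y = X' x y" "x \<in> C" "z \<in> C"
  shows "fisher_witness C A X x z = fisher_witness C A X' x z"
  using assms by (simp add: fisher_witness_def mmult_def)

lemma fisher_witness_sld_diagonal:
  assumes Ah: "hermitian_on C Ah"
  shows "(\<Sum>k\<in>C. of_real (lam k) * fisher_witness C Ah (sld lam Ah) k k)
    = of_real (2 * (\<Sum>k\<in>C. \<Sum>l\<in>C. if lam k + lam l > 0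
        then (lam k - lam l)\<^sup>2 / (lam k + lam l) * (cmod (Ah k l))\<^sup>2 else 0))"
proof -
  define L where "L = sld lam Ah"
  define F where "F k m = of_real (lam k) * (2 * \<i> * (Ah k m * L m k - L k m * Ah m k) - L k m * L m k)"
    for k m
  define G where "G k m = (if lam k + lam m > 0
      then (lam k - lam m)\<^sup>2 / (lam k + lam m) * (cmod (Ah k m))\<^sup>2 else 0)" for k m
  have comb: "(\<Sum>m\<in>C. c * (d * (a m - b m) - f m)) = c * (d * (sum a C - sum b C) - sum f C)"
    for c d :: complex and a b f
    by (simp add: sum_subtractf sum_distrib_left[symmetric] right_diff_distrib)
  have row: "(\<Sum>m\<in>C. F k m) = of_real (lam k) * fisher_witness C Ah L k k" for k
    unfolding F_def fisher_witness_def mmult_def by (rule comb)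
  have pair: "F k m + F m k = 4 * of_real (G k m)" if "k \<in> C" "m \<in> C" for k m
  proof (cases "lam k + lam m > 0")
    case True
    then have "lam m + lam k > 0" by simp
    with True show ?thesis
      using sld_pair_identity[OF True, of "Ah k m"] hermitian_on_cnj[OF Ah that]
      by (simp add: F_def G_def L_def sld_def)
  next
    case False
    then show ?thesis by (simp add: F_def G_def L_def sld_def add.commute)
  qed
  have "2 * (\<Sum>k\<in>C. \<Sum>m\<in>C. F k m) = (\<Sum>k\<in>C. \<Sum>m\<in>C. F k m) + (\<Sum>m\<in>C. \<Sum>k\<in>C. F k m)"
    by (simp add: sum.swap[of F C C])
  also have "\<dots> = (\<Sum>k\<in>C. \<Sum>m\<in>C. F k m + F m k)"
    by (simp add: sum.distrib sum.swap[of "\<lambda>m k. F k m"])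
  also have "\<dots> = 2 * of_real (2 * (\<Sum>k\<in>C. \<Sum>m\<in>C. G k m))"
    using pair by (simp add: sum_distrib_left cong: sum.cong)
  finally show ?thesis
    by (simp add: row G_def L_def)
qed

definition eigenbasis_on :: "'a set \<Rightarrow> ('a \<Rightarrow> 'a \<Rightarrow> complex) \<Rightarrow> ('a \<Rightarrow> 'a \<Rightarrow> complex) \<Rightarrow> ('a \<Rightarrow> real) \<Rightarrow> bool"
  where "eigenbasis_on C \<rho> e lam \<longleftrightarrow>
    (\<forall>k\<in>C. \<forall>l\<in>C. (\<Sum>x\<in>C. cnj (e k x) * e l x) = (if k = l then 1 else 0)) \<and>
    (\<forall>k\<in>C. \<forall>x\<in>C. (\<Sum>y\<in>C. \<rho> x y * e k y) = of_real (lam k) * e k x)"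

definition fisher_sum :: "'a set \<Rightarrow> ('a \<Rightarrow> 'a \<Rightarrow> complex) \<Rightarrow> ('a \<Rightarrow> real) \<Rightarrow> ('a \<Rightarrow> 'a \<Rightarrow> complex) \<Rightarrow> real"
  where "fisher_sum C e lam A = 2 * (\<Sum>k\<in>C. \<Sum>l\<in>C. if lam k + lam l > 0
    then (lam k - lam l)\<^sup>2 / (lam k + lam l) * (cmod (\<Sum>x\<in>C. \<Sum>y\<in>C. cnj (e k x) * A x y * e l y))\<^sup>2
    else 0)"

lemma QFI_eq_fisher_sum:
  assumes "finite S" "hermitian_on (cfg S) \<rho>"
  obtains e lam where "eigenbasis_on (cfg S) \<rho> e lam" "QFI S \<rho> A = fisher_sum (cfg S) e lam A"
proof -
  obtain U lam where U: "unitary_on (cfg S) U"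
    and ev: "\<And>k x. k \<in> cfg S \<Longrightarrow> x \<in> cfg S \<Longrightarrow> mvec (cfg S) \<rho> (\<lambda>y. U y k) x = of_real (lam k) * U x k"
    using hermitian_spectral[OF finite_cfg[OF assms(1)] assms(2)] by blast
  have "eigendecomp S \<rho> (\<lambda>k x. U x k) lam"
    using U ev by (simp add: eigendecomp_def unitary_on_def mmult_def madj_def ident_def mvec_def)
  define p where "p = (SOME (e, lam). eigendecomp S \<rho> e lam)"
  have "case p of (e, lam) \<Rightarrow> eigendecomp S \<rho> e lam"
    unfolding p_def by (rule someI_ex) (use \<open>eigendecomp S \<rho> _ _\<close> in auto)
  then obtain e0 lam0 where p: "p = (e0, lam0)" and "eigendecomp S \<rho> e0 lam0"
    by (cases p) auto
  have "QFI S \<rho> A = fisher_sum (cfg S) e0 lam0 A"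
    unfolding QFI_def p_def[symmetric] p mat_el_def fisher_sum_def by simp
  moreover have "eigenbasis_on (cfg S) \<rho> e0 lam0"
    using \<open>eigendecomp S \<rho> e0 lam0\<close> by (simp add: eigendecomp_def eigenbasis_on_def)
  ultimately show thesis by (rule that[rotated])
qed

lemma eigenbasis_on_unitary:
  assumes "finite C" "eigenbasis_on C \<rho> e lam"
  shows "unitary_on C (\<lambda>x k. e k x)"
    and "\<And>k x. k \<in> C \<Longrightarrow> x \<in> C \<Longrightarrow> mvec C \<rho> (\<lambda>y. e k y) x = of_real (lam k) * e k x"
proof -
  have "\<forall>x\<in>C. \<forall>y\<in>C. mmult C (madj (\<lambda>x k. e k x)) (\<lambda>x k. e k x) x y = ident x y"
    using assms(2) by (simp add: eigenbasis_on_def mmult_def madj_def ident_def)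
  then show "unitary_on C (\<lambda>x k. e k x)"
    using mmult_right_inverse[OF assms(1)] by (simp add: unitary_on_def)
  show "\<And>k x. k \<in> C \<Longrightarrow> x \<in> C \<Longrightarrow> mvec C \<rho> (\<lambda>y. e k y) x = of_real (lam k) * e k x"
    using assms(2) by (simp add: eigenbasis_on_def mvec_def)
qed

lemma in_basis_congruence:
  assumes "finite C" "unitary_on C U" "k \<in> C" "l \<in> C"
  shows "in_basis C U (mmult C U (mmult C L (madj U))) k l = L k l"
proof -
  have "in_basis C U (mmult C U (mmult C L (madj U))) k l
      = mmult C (mmult C (madj U) U) (mmult C L (mmult C (madj U) U)) k l"
    by (simp add: in_basis_def mmult_assoc)
  also have "\<dots> = L k l"
    using unitary_cancel_left[OF assms(1) unitary_on_madj[OF assms(2)], unfolded madj_madj]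
      unitary_cancel_right[OF assms(1) unitary_on_madj[OF assms(2)], unfolded madj_madj] assms(3,4)
    by simp
  finally show ?thesis .
qed

lemma fisher_sum_eq_expect_witness:
  assumes fin: "finite C" and eb: "eigenbasis_on C \<rho> e lam" and A: "hermitian_on C A"
  obtains X where "hermitian_on C X" "fisher_sum C e lam A = Re (expect C \<rho> (fisher_witness C A X))"
proof
  define U where "U = (\<lambda>x k. e k x)"
  have U: "unitary_on C U"
    and ev: "\<And>k x. k \<in> C \<Longrightarrow> x \<in> C \<Longrightarrow> mvec C \<rho> (\<lambda>y. U y k) x = of_real (lam k) * U x k"
    using eigenbasis_on_unitary[OF fin eb] by (simp_all add: U_def)
  define Ah where "Ah = in_basis C U A"
  have Ah: "hermitian_on C Ah"
    unfolding Ah_def by (rule hermitian_on_in_basis[OF A])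
  define X where "X = mmult C U (mmult C (sld lam Ah) (madj U))"
  show "hermitian_on C X"
    unfolding X_def by (rule hermitian_on_congruence[OF hermitian_on_sld[OF Ah]])
  have "expect C \<rho> (fisher_witness C A X) = (\<Sum>k\<in>C. of_real (lam k) * fisher_witness C Ah (in_basis C U X) k k)"
    by (simp add: expect_eigenbasis[OF fin U ev] in_basis_fisher_witness[OF fin U] Ah_def)
  also have "\<dots> = (\<Sum>k\<in>C. of_real (lam k) * fisher_witness C Ah (sld lam Ah) k k)"
    using fisher_witness_cong[of C "in_basis C U X" "sld lam Ah" _ _ Ah]
      in_basis_congruence[OF fin U] by (simp add: X_def cong: sum.cong)
  also have "\<dots> = of_real (fisher_sum C e lam A)"
  proof -
    have "Ah k l = (\<Sum>x\<in>C. \<Sum>y\<in>C. cnj (e k x) * A x y * e l y)" for k l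
      unfolding Ah_def by (simp add: in_basis_def mmult_def madj_def U_def sum_distrib_left mult.assoc)
    then show ?thesis
      unfolding fisher_witness_sld_diagonal[OF Ah] fisher_sum_def by presburger
  qed
  finally show "fisher_sum C e lam A = Re (expect C \<rho> (fisher_witness C A X))"
    by simp
qed

lemma restr_cfg [simp]: "restr A x \<in> cfg A"
  by (simp add: restr_def cfg_def)

lemma bij_betw_cfg_Un:
  assumes "B \<inter> U = {}"
  shows "bij_betw (\<lambda>(u, w) i. if i \<in> B then u i else w i) (cfg B \<times> cfg U) (cfg (B \<union> U))"
proof (rule bij_betwI[where g = "\<lambda>x. (restr B x, restr U x)"])
  show "(\<lambda>(u, w) i. if i \<in> B then u i else w i) \<in> cfg B \<times> cfg U \<rightarrow> cfg (B \<union> U)"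
    by (auto simp: cfg_def)
  show "(\<lambda>x. (restr B x, restr U x)) \<in> cfg (B \<union> U) \<rightarrow> cfg B \<times> cfg U"
    by simp
  show "(restr B ((\<lambda>(u, w) i. if i \<in> B then u i else w i) p),
      restr U ((\<lambda>(u, w) i. if i \<in> B then u i else w i) p)) = p" if "p \<in> cfg B \<times> cfg U" for p
    using that assms by (auto simp: restr_def cfg_def fun_eq_iff)
  show "(\<lambda>(u, w) i. if i \<in> B then u i else w i) (restr B x, restr U x) = x" if "x \<in> cfg (B \<union> U)" for x
    using that by (auto simp: restr_def cfg_def fun_eq_iff)
qed

lemma sum_cfg_Union_prod:
  fixes f :: "nat set \<Rightarrow> config \<Rightarrow> 'b::comm_semiring_1"
  assumes "finite \<Lambda>" and "disjoint \<Lambda>"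
  shows "(\<Sum>x\<in>cfg (\<Union>\<Lambda>). \<Prod>A\<in>\<Lambda>. f A (restr A x)) = (\<Prod>A\<in>\<Lambda>. \<Sum>u\<in>cfg A. f A u)"
  using assms
proof (induction \<Lambda> rule: finite_induct)
  case empty
  have "cfg {} = {\<lambda>_. False}" by (auto simp: cfg_def)
  then show ?case by simp
next
  case (insert B \<Lambda>)
  define U where "U = \<Union>\<Lambda>"
  have "B \<inter> U = {}"
    using insert(2,4) by (auto simp: U_def pairwise_insert disjnt_def)
  define join where "join = (\<lambda>(u, w) i. if i \<in> B then u i else (w i :: bool))"
  have join_B: "restr B (join (u, w)) = u" if "u \<in> cfg B" for u w
    using that by (auto simp: join_def restr_def cfg_def fun_eq_iff)
  have join_A: "restr A (join (u, w)) = restr A w" if "A \<in> \<Lambda>" for A u w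
    using that \<open>B \<inter> U = {}\<close> by (auto simp: join_def restr_def fun_eq_iff U_def)
  have "(\<Sum>x\<in>cfg (\<Union>(insert B \<Lambda>)). \<Prod>A\<in>insert B \<Lambda>. f A (restr A x))
      = (\<Sum>x\<in>cfg (B \<union> U). f B (restr B x) * (\<Prod>A\<in>\<Lambda>. f A (restr A x)))"
    using insert(1,2) by (simp add: U_def)
  also have "\<dots> = (\<Sum>p\<in>cfg B \<times> cfg U. f B (restr B (join p)) * (\<Prod>A\<in>\<Lambda>. f A (restr A (join p))))"
    by (rule sum.reindex_bij_betw[OF bij_betw_cfg_Un[OF \<open>B \<inter> U = {}\<close>, folded join_def], symmetric])
  also have "\<dots> = (\<Sum>u\<in>cfg B. \<Sum>w\<in>cfg U. f B (restr B (join (u, w))) * (\<Prod>A\<in>\<Lambda>. f A (restr A (join (u, w)))))"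
    by (simp add: sum.cartesian_product)
  also have "\<dots> = (\<Sum>u\<in>cfg B. \<Sum>w\<in>cfg U. f B u * (\<Prod>A\<in>\<Lambda>. f A (restr A w)))"
    by (intro sum.cong refl) (simp add: join_B join_A cong: prod.cong)
  also have "\<dots> = (\<Sum>u\<in>cfg B. f B u) * (\<Sum>w\<in>cfg U. \<Prod>A\<in>\<Lambda>. f A (restr A w))"
    by (simp add: sum_product)
  also have "\<dots> = (\<Sum>u\<in>cfg B. f B u) * (\<Prod>A\<in>\<Lambda>. \<Sum>u\<in>cfg A. f A u)"
    using insert.IH insert.prems by (simp add: U_def pairwise_insert)
  also have "\<dots> = (\<Prod>A\<in>insert B \<Lambda>. \<Sum>u\<in>cfg A. f A u)"
    using insert(1,2) by simp
  finally show ?case .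
qed

definition tensor :: "nat set set \<Rightarrow> (nat set \<Rightarrow> op) \<Rightarrow> op"
  where "tensor \<Lambda> Ob = (\<lambda>x y. \<Prod>A\<in>\<Lambda>. Ob A (restr A x) (restr A y))"

lemma mmult_tensor:
  assumes "finite \<Lambda>" "disjoint \<Lambda>"
  shows "mmult (cfg (\<Union>\<Lambda>)) (tensor \<Lambda> P) (tensor \<Lambda> Q) = tensor \<Lambda> (\<lambda>A. mmult (cfg A) (P A) (Q A))"
proof (intro ext)
  fix x z
  show "mmult (cfg (\<Union>\<Lambda>)) (tensor \<Lambda> P) (tensor \<Lambda> Q) x z = tensor \<Lambda> (\<lambda>A. mmult (cfg A) (P A) (Q A)) x z"
    using sum_cfg_Union_prod[OF assms, of "\<lambda>A v. P A (restr A x) v * Q A v (restr A z)"]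
    by (simp add: mmult_def tensor_def prod.distrib)
qed

lemma madj_tensor: "madj (tensor \<Lambda> Ob) = tensor \<Lambda> (\<lambda>A. madj (Ob A))"
  by (simp add: madj_def tensor_def fun_eq_iff)

lemma tensor_cong:
  "(\<And>A u v. A \<in> \<Lambda> \<Longrightarrow> u \<in> cfg A \<Longrightarrow> v \<in> cfg A \<Longrightarrow> Ob A u v = Ob' A u v) \<Longrightarrow> tensor \<Lambda> Ob = tensor \<Lambda> Ob'"
  by (simp add: tensor_def fun_eq_iff)

lemma expect_tensor:
  assumes "finite \<Lambda>" "disjoint \<Lambda>"
  shows "expect (cfg (\<Union>\<Lambda>)) (tensor \<Lambda> \<tau>) (tensor \<Lambda> Ob) = (\<Prod>A\<in>\<Lambda>. expect (cfg A) (\<tau> A) (Ob A))"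
  unfolding expect_def mmult_tensor[OF assms] unfolding tensor_def by (rule sum_cfg_Union_prod[OF assms])

lemma tensor_ident:
  assumes "finite \<Lambda>" "x \<in> cfg (\<Union>\<Lambda>)" "y \<in> cfg (\<Union>\<Lambda>)"
  shows "tensor \<Lambda> (\<lambda>_. ident) x y = ident x y"
proof (cases "x = y")
  case False
  then obtain i where "x i \<noteq> y i" by auto
  with assms obtain A where "A \<in> \<Lambda>" "i \<in> A" by (auto simp: cfg_def)
  with \<open>x i \<noteq> y i\<close> have "ident (restr A x) (restr A y) = 0"
    by (auto simp: ident_def restr_def fun_eq_iff)
  with \<open>A \<in> \<Lambda>\<close> assms(1) False show ?thesis
    by (auto simp: tensor_def ident_def intro: prod_zero)
qed (simp add: tensor_def ident_def)

lemma psd_tensor: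
  assumes "finite \<Lambda>" "disjoint \<Lambda>" "\<And>A. A \<in> \<Lambda> \<Longrightarrow> finite A"
    and "\<And>A. A \<in> \<Lambda> \<Longrightarrow> density_on A (\<tau> A)"
  shows "psd_on (cfg (\<Union>\<Lambda>)) (tensor \<Lambda> \<tau>)"
proof -
  have "\<exists>R. \<forall>u\<in>cfg A. \<forall>v\<in>cfg A. \<tau> A u v = mmult (cfg A) R (madj R) u v" if "A \<in> \<Lambda>" for A
    using psd_hermitian_factor[OF finite_cfg density_on_hermitian density_on_psd] assms(3,4) that
    by metis
  then obtain R where R: "\<And>A u v. A \<in> \<Lambda> \<Longrightarrow> u \<in> cfg A \<Longrightarrow> v \<in> cfg A \<Longrightarrow> \<tau> A u v = mmult (cfg A) (R A) (madj (R A)) u v"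
    by metis
  have "tensor \<Lambda> \<tau> = tensor \<Lambda> (\<lambda>A. mmult (cfg A) (R A) (madj (R A)))"
    by (rule tensor_cong) (rule R)
  also have "\<dots> = mmult (cfg (\<Union>\<Lambda>)) (tensor \<Lambda> R) (madj (tensor \<Lambda> R))"
    by (simp add: mmult_tensor[OF assms(1,2)] madj_tensor)
  finally show ?thesis
    by (simp add: psd_mmult_madj)
qed

lemma partition_on_finite:
  assumes "partition_on S \<Lambda>" "finite S"
  shows "finite \<Lambda>" and "A \<in> \<Lambda> \<Longrightarrow> finite A"
  using assms by (auto simp: partition_on_def intro: finite_UnionD finite_subset[OF Union_upper])

lemma partition_on_card_pos:
  assumes "partition_on S \<Lambda>" "finite S" "A \<in> \<Lambda>"
  shows "1 \<le> card A"
  using assms partition_on_finite(2)[OF assms(1,2,3)] by (auto simp: partition_on_def Suc_le_eq card_gt_0_iff)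

lemma partition_on_sum_card:
  assumes "partition_on S \<Lambda>" "finite S"
  shows "(\<Sum>A\<in>\<Lambda>. card A) = card S"
  using card_Union_disjoint[of \<Lambda>] partition_on_finite(2)[OF assms] assms(1)
  by (auto simp: partition_on_def)

lemma psd_tensor_partition:
  assumes "partition_on S \<Lambda>" "finite S" "\<And>A. A \<in> \<Lambda> \<Longrightarrow> density_on A (\<tau> A)"
  shows "psd_on (cfg S) (tensor \<Lambda> \<tau>)"
  using psd_tensor[OF partition_on_finite(1)[OF assms(1,2)] _ partition_on_finite(2)[OF assms(1,2)] assms(3)]
    assms(1) by (simp add: partition_on_def)

definition embed :: "nat set set \<Rightarrow> nat set \<Rightarrow> op \<Rightarrow> op"
  where "embed \<Lambda> A K = tensor \<Lambda> (\<lambda>B. if B = A then K else ident)"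

lemma embed_eq:
  assumes "finite \<Lambda>" "A \<in> \<Lambda>"
  shows "embed \<Lambda> A K x y = K (restr A x) (restr A y) * (\<Prod>B\<in>\<Lambda> - {A}. ident (restr B x) (restr B y))"
proof -
  have "(\<Prod>B\<in>\<Lambda> - {A}. (if B = A then K else ident) (restr B x) (restr B y))
      = (\<Prod>B\<in>\<Lambda> - {A}. ident (restr B x) (restr B y))"
    by (rule prod.cong) auto
  then show ?thesis
    unfolding embed_def tensor_def prod.remove[OF assms] by simp
qed

lemma embed_ident:
  assumes "finite \<Lambda>" "x \<in> cfg (\<Union>\<Lambda>)" "y \<in> cfg (\<Union>\<Lambda>)"
  shows "embed \<Lambda> A ident x y = ident x y"
  using tensor_ident[OF assms] by (simp add: embed_def)

lemma expect_ident_density: "density_on A \<tau> \<Longrightarrow> finite A \<Longrightarrow> expect (cfg A) \<tau> ident = 1"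
  by (simp add: expect_ident finite_cfg density_on_trace)

lemma expect_mmult_ident_left: "finite C \<Longrightarrow> expect C \<sigma> (mmult C ident X) = expect C \<sigma> X"
  by (intro expect_cong) (simp add: mmult_ident_left)

lemma expect_mmult_ident_right: "finite C \<Longrightarrow> expect C \<sigma> (mmult C X ident) = expect C \<sigma> X"
  by (intro expect_cong) (simp add: mmult_ident_right)

lemma expect_tensor_embed_mmult:
  assumes fin: "finite \<Lambda>" and disj: "disjoint \<Lambda>" and fin_blocks: "\<And>B. B \<in> \<Lambda> \<Longrightarrow> finite B"
    and dens: "\<And>B. B \<in> \<Lambda> \<Longrightarrow> density_on B (\<tau> B)" and A: "A \<in> \<Lambda>" and A': "A' \<in> \<Lambda>"
  shows "expect (cfg (\<Union>\<Lambda>)) (tensor \<Lambda> \<tau>) (mmult (cfg (\<Union>\<Lambda>)) (embed \<Lambda> A K) (embed \<Lambda> A' K'))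
    = (if A = A' then expect (cfg A) (\<tau> A) (mmult (cfg A) K K')
       else expect (cfg A) (\<tau> A) K * expect (cfg A') (\<tau> A') K')"
proof -
  define f where "f B = expect (cfg B) (\<tau> B)
    (mmult (cfg B) (if B = A then K else ident) (if B = A' then K' else ident))" for B
  have f_other: "f B = 1" if "B \<in> \<Lambda>" "B \<noteq> A" "B \<noteq> A'" for B
    using that fin_blocks dens
    by (simp add: f_def expect_mmult_ident_left finite_cfg expect_ident_density)
  have "expect (cfg (\<Union>\<Lambda>)) (tensor \<Lambda> \<tau>) (mmult (cfg (\<Union>\<Lambda>)) (embed \<Lambda> A K) (embed \<Lambda> A' K'))
      = (\<Prod>B\<in>\<Lambda>. f B)"
    by (simp add: embed_def mmult_tensor[OF fin disj] expect_tensor[OF fin disj] f_def if_distrib)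
  also have "\<dots> = f A * (\<Prod>B\<in>\<Lambda> - {A}. f B)"
    by (rule prod.remove[OF fin A])
  also have "\<dots> = (if A = A' then f A else f A * f A')"
  proof (cases "A = A'")
    case True
    then show ?thesis using f_other by (simp add: prod.neutral)
  next
    case False
    then have "(\<Prod>B\<in>\<Lambda> - {A}. f B) = f A' * (\<Prod>B\<in>\<Lambda> - {A} - {A'}. f B)"
      using fin A' by (intro prod.remove) auto
    also have "(\<Prod>B\<in>\<Lambda> - {A} - {A'}. f B) = 1"
      using f_other by (intro prod.neutral) auto
    finally show ?thesis using False by simp
  qed
  finally show ?thesis
    using A A' fin_blocks
    by (simp add: f_def expect_mmult_ident_left expect_mmult_ident_right finite_cfg)
qed

definition pauli_at :: "real \<Rightarrow> real \<Rightarrow> real \<Rightarrow> nat \<Rightarrow> op"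
  where "pauli_at n1 n2 n3 i x y = (if \<forall>j. j \<noteq> i \<longrightarrow> x j = y j then pauli_n n1 n2 n3 (x i) (y i) else 0)"

definition spin :: "real \<Rightarrow> real \<Rightarrow> real \<Rightarrow> nat set \<Rightarrow> op"
  where "spin n1 n2 n3 A x y = 1 / 2 * (\<Sum>i\<in>A. pauli_at n1 n2 n3 i x y)"

lemma J_op_eq_spin: "J_op N n1 n2 n3 = spin n1 n2 n3 {1..N}"
  by (simp add: J_op_def spin_def pauli_at_def fun_eq_iff)

lemma cnj_pauli_at: "cnj (pauli_at n1 n2 n3 i y x) = pauli_at n1 n2 n3 i x y"
proof -
  have cnj_pauli: "cnj (pauli_n n1 n2 n3 b a) = pauli_n n1 n2 n3 a b" for a b
    by (cases a; cases b) (simp_all add: pauli_n_def complex_eq_iff)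
  have sym: "(\<forall>j. j \<noteq> i \<longrightarrow> y j = x j) \<longleftrightarrow> (\<forall>j. j \<noteq> i \<longrightarrow> x j = y j)"
    by auto
  show ?thesis
    unfolding pauli_at_def sym by (cases "\<forall>j. j \<noteq> i \<longrightarrow> x j = y j") (auto simp: cnj_pauli)
qed

lemma hermitian_on_spin: "hermitian_on C (spin n1 n2 n3 A)"
  by (simp add: hermitian_on_def spin_def cnj_pauli_at)

lemma pauli_n_square:
  assumes "n1\<^sup>2 + n2\<^sup>2 + n3\<^sup>2 = 1"
  shows "pauli_n n1 n2 n3 a False * pauli_n n1 n2 n3 False b + pauli_n n1 n2 n3 a True * pauli_n n1 n2 n3 True b
    = (if a = b then 1 else 0)"
  using assms by (cases a; cases b) (simp_all add: pauli_n_def complex_eq_iff power2_eq_square algebra_simps)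

lemma mmult_pauli_at:
  assumes "finite A" "i \<in> A" "u \<in> cfg A"
  shows "mmult (cfg A) (pauli_at n1 n2 n3 i) Y u v
    = pauli_at n1 n2 n3 i u (u(i := False)) * Y (u(i := False)) v
      + pauli_at n1 n2 n3 i u (u(i := True)) * Y (u(i := True)) v"
proof -
  let ?P = "pauli_at n1 n2 n3 i"
  define W where "W = {u(i := False), u(i := True)}"
  have "W \<subseteq> cfg A" using assms(2,3) by (auto simp: W_def cfg_def)
  have "mmult (cfg A) ?P Y u v = (\<Sum>w\<in>W. ?P u w * Y w v)"
    unfolding mmult_def
  proof (rule sum.mono_neutral_right[OF finite_cfg[OF \<open>finite A\<close>] \<open>W \<subseteq> cfg A\<close>], intro ballI)
    fix w assume w: "w \<in> cfg A - W"
    have "\<not> (\<forall>j. j \<noteq> i \<longrightarrow> u j = w j)"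
    proof
      assume "\<forall>j. j \<noteq> i \<longrightarrow> u j = w j"
      then have "w = u(i := w i)" by (auto simp: fun_eq_iff)
      then have "w \<in> W" by (cases "w i") (auto simp: W_def)
      with w show False by simp
    qed
    then have "?P u w = 0" unfolding pauli_at_def by (rule if_not_P)
    then show "?P u w * Y w v = 0" by simp
  qed
  also have "u(i := False) \<noteq> u(i := True)" by (metis fun_upd_same)
  then have "(\<Sum>w\<in>W. ?P u w * Y w v) = ?P u (u(i := False)) * Y (u(i := False)) v + ?P u (u(i := True)) * Y (u(i := True)) v"
    by (simp add: W_def)
  finally show ?thesis .
qed

lemma pauli_at_square:
  assumes unit: "n1\<^sup>2 + n2\<^sup>2 + n3\<^sup>2 = 1" and "finite A" "i \<in> A" "u \<in> cfg A"
  shows "mmult (cfg A) (pauli_at n1 n2 n3 i) (pauli_at n1 n2 n3 i) u v = ident u v"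
proof (cases "\<forall>j. j \<noteq> i \<longrightarrow> u j = v j")
  case True
  have "u = v \<longleftrightarrow> u i = v i"
  proof
    assume "u i = v i"
    with True show "u = v" by (intro ext) metis
  qed simp
  with True show ?thesis
    by (simp add: mmult_pauli_at[OF assms(2-4)] pauli_at_def ident_def pauli_n_square[OF unit])
next
  case False
  let ?P = "pauli_at n1 n2 n3 i"
  have vanish: "?P u w * ?P w v = 0" for w
  proof (cases "\<forall>j. j \<noteq> i \<longrightarrow> u j = w j")
    case True
    with False have "\<not> (\<forall>j. j \<noteq> i \<longrightarrow> w j = v j)" by auto
    then have "?P w v = 0" unfolding pauli_at_def by (rule if_not_P)
    then show ?thesis by simp
  next
    case False
    then have "?P u w = 0" unfolding pauli_at_def by (rule if_not_P)
    then show ?thesis by simp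
  qed
  from False have "u \<noteq> v" by auto
  then show ?thesis
    unfolding mmult_pauli_at[OF assms(2-4)] vanish by (simp add: ident_def)
qed

lemma expect_spin_square_le:
  assumes unit: "n1\<^sup>2 + n2\<^sup>2 + n3\<^sup>2 = 1" and fin: "finite A" and dens: "density_on A \<tau>"
  shows "Re (expect (cfg A) \<tau> (mmult (cfg A) (spin n1 n2 n3 A) (spin n1 n2 n3 A))) \<le> (real (card A))\<^sup>2 / 4"
proof -
  define P where "P = pauli_at n1 n2 n3"
  define T where "T i j = Re (expect (cfg A) \<tau> (mmult (cfg A) (P i) (P j)))" for i j
  have expand: "expect (cfg A) \<tau> (mmult (cfg A) (spin n1 n2 n3 A) (spin n1 n2 n3 A))
      = 1 / 2 * (1 / 2 * (\<Sum>i\<in>A. \<Sum>j\<in>A. expect (cfg A) \<tau> (mmult (cfg A) (P i) (P j))))"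
    unfolding spin_def[abs_def] P_def mmult_smult_left mmult_smult_right mmult_sum_left mmult_sum_right
    by (simp only: expect_smult expect_sum)
  have sq: "Re (expect (cfg A) \<tau> (mmult (cfg A) (spin n1 n2 n3 A) (spin n1 n2 n3 A)))
      = 1 / 4 * (\<Sum>i\<in>A. \<Sum>j\<in>A. T i j)"
    unfolding expand by (simp add: T_def)
  have diag: "T i i = 1" if "i \<in> A" for i
  proof -
    have "expect (cfg A) \<tau> (mmult (cfg A) (P i) (P i)) = expect (cfg A) \<tau> ident"
      using pauli_at_square[OF unit fin that] by (intro expect_cong) (simp add: P_def)
    then show ?thesis using expect_ident_density[OF dens fin] by (simp add: T_def)
  qed
  have pair: "T i j + T j i \<le> 2" if "i \<in> A" "j \<in> A" for i j
  proof -
    define D where "D x y = P i x y - P j x y" for x y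
    have "madj D = D"
      by (simp add: madj_def D_def P_def cnj_pauli_at fun_eq_iff)
    then have "0 \<le> Re (expect (cfg A) \<tau> (mmult (cfg A) D D))"
      using psd_expect_nonneg[OF density_on_psd[OF dens], of D] by simp
    also have "expect (cfg A) \<tau> (mmult (cfg A) D D)
        = expect (cfg A) \<tau> (mmult (cfg A) (P i) (P i)) - expect (cfg A) \<tau> (mmult (cfg A) (P i) (P j))
          - (expect (cfg A) \<tau> (mmult (cfg A) (P j) (P i)) - expect (cfg A) \<tau> (mmult (cfg A) (P j) (P j)))"
      unfolding D_def mmult_diff_left mmult_diff_right by (simp add: expect_diff)
    finally show ?thesis using diag that by (simp add: T_def)
  qed
  have "2 * (\<Sum>i\<in>A. \<Sum>j\<in>A. T i j) = (\<Sum>i\<in>A. \<Sum>j\<in>A. T i j + T j i)"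
    by (simp add: sum.distrib sum.swap[of "\<lambda>j i. T i j"])
  also have "\<dots> \<le> (\<Sum>i\<in>A. \<Sum>j\<in>A. 2)"
    using pair by (intro sum_mono) auto
  finally show ?thesis
    unfolding sq by (simp add: power2_eq_square)
qed

lemma restr_agree_iff:
  assumes x: "x \<in> cfg (\<Union>\<Lambda>)" and y: "y \<in> cfg (\<Union>\<Lambda>)" and others: "\<forall>B\<in>\<Lambda> - {A}. restr B x = restr B y"
  shows "(\<forall>j. j \<noteq> i \<longrightarrow> restr A x j = restr A y j) \<longleftrightarrow> (\<forall>j. j \<noteq> i \<longrightarrow> x j = y j)"
proof
  assume agree: "\<forall>j. j \<noteq> i \<longrightarrow> restr A x j = restr A y j"
  show "\<forall>j. j \<noteq> i \<longrightarrow> x j = y j"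
  proof (intro allI impI)
    fix j assume "j \<noteq> i"
    show "x j = y j"
    proof (cases "j \<in> \<Union>\<Lambda>")
      case False
      then show ?thesis using x y by (auto simp: cfg_def)
    next
      case True
      then obtain B where B: "B \<in> \<Lambda>" "j \<in> B" by auto
      show ?thesis
      proof (cases "B = A")
        case True
        with agree \<open>j \<noteq> i\<close> B show ?thesis by (auto simp: restr_def)
      next
        case False
        with B others have "restr B x j = restr B y j" by simp
        with B show ?thesis by (simp add: restr_def)
      qed
    qed
  qed
qed (auto simp: restr_def)

lemma pauli_at_eq_embed:
  assumes fin: "finite \<Lambda>" and disj: "disjoint \<Lambda>" and A: "A \<in> \<Lambda>" and i: "i \<in> A"
    and x: "x \<in> cfg (\<Union>\<Lambda>)" and y: "y \<in> cfg (\<Union>\<Lambda>)"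
  shows "pauli_at n1 n2 n3 i x y = embed \<Lambda> A (pauli_at n1 n2 n3 i) x y"
proof (cases "\<forall>B\<in>\<Lambda> - {A}. restr B x = restr B y")
  case True
  have "restr A x i = x i" "restr A y i = y i"
    using i by (simp_all add: restr_def)
  then have "pauli_at n1 n2 n3 i (restr A x) (restr A y) = pauli_at n1 n2 n3 i x y"
    unfolding pauli_at_def restr_agree_iff[OF x y True] by (simp only:)
  moreover have "(\<Prod>B\<in>\<Lambda> - {A}. ident (restr B x) (restr B y)) = 1"
    using True by (simp add: ident_def)
  ultimately show ?thesis by (simp add: embed_eq[OF fin A])
next
  case False
  then obtain B j where B: "B \<in> \<Lambda>" "B \<noteq> A" and j: "j \<in> B" "x j \<noteq> y j"
    by (auto simp: restr_def fun_eq_iff split: if_splits)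
  with disj A have "j \<notin> A" by (auto simp: pairwise_def disjnt_def)
  with i j have "\<not> (\<forall>j. j \<noteq> i \<longrightarrow> x j = y j)" by auto
  then have "pauli_at n1 n2 n3 i x y = 0" unfolding pauli_at_def by (rule if_not_P)
  moreover have "ident (restr B x) (restr B y) = 0"
    using j by (auto simp: ident_def restr_def fun_eq_iff)
  then have "(\<Prod>B\<in>\<Lambda> - {A}. ident (restr B x) (restr B y)) = 0"
    using fin B by (intro prod_zero) auto
  ultimately show ?thesis by (simp add: embed_eq[OF fin A])
qed

lemma spin_Union_eq_sum_embed:
  assumes fin: "finite \<Lambda>" and disj: "disjoint \<Lambda>" and fin_blocks: "\<And>A. A \<in> \<Lambda> \<Longrightarrow> finite A"
    and x: "x \<in> cfg (\<Union>\<Lambda>)" and y: "y \<in> cfg (\<Union>\<Lambda>)"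
  shows "spin n1 n2 n3 (\<Union>\<Lambda>) x y = (\<Sum>A\<in>\<Lambda>. embed \<Lambda> A (spin n1 n2 n3 A) x y)"
proof -
  have "\<forall>A\<in>\<Lambda>. \<forall>B\<in>\<Lambda>. A \<noteq> B \<longrightarrow> A \<inter> B = {}"
    using disj by (auto simp: pairwise_def disjnt_def)
  then have "spin n1 n2 n3 (\<Union>\<Lambda>) x y = 1 / 2 * (\<Sum>A\<in>\<Lambda>. \<Sum>i\<in>A. pauli_at n1 n2 n3 i x y)"
    using fin_blocks by (simp add: spin_def sum.Union_disjoint)
  also have "\<dots> = (\<Sum>A\<in>\<Lambda>. 1 / 2 * (\<Sum>i\<in>A. embed \<Lambda> A (pauli_at n1 n2 n3 i) x y))"
    using pauli_at_eq_embed[OF fin disj _ _ x y] by (simp add: sum_distrib_left)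
  also have "\<dots> = (\<Sum>A\<in>\<Lambda>. embed \<Lambda> A (spin n1 n2 n3 A) x y)"
    by (intro sum.cong refl) (simp add: embed_eq[OF fin] spin_def sum_distrib_left sum_distrib_right)
  finally show ?thesis .
qed

lemma expect_centered_square:
  assumes fin: "finite C" and \<sigma>: "hermitian_on C \<sigma>" "(\<Sum>x\<in>C. \<sigma> x x) = 1" and J: "hermitian_on C J"
  defines "c \<equiv> Re (expect C \<sigma> J)"
  shows "expect C \<sigma> (\<lambda>x y. J x y - of_real c * ident x y) = 0"
    and "Re (expect C \<sigma> (mmult C (\<lambda>x y. J x y - of_real c * ident x y) (\<lambda>x y. J x y - of_real c * ident x y)))
      = Re (expect C \<sigma> (mmult C J J)) - c\<^sup>2"
proof -
  have J_mean: "expect C \<sigma> J = of_real c"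
    using expect_hermitian_real[OF \<sigma>(1) J] by (simp add: c_def)
  have one: "expect C \<sigma> ident = 1"
    using fin \<sigma>(2) by (simp add: expect_ident)
  show "expect C \<sigma> (\<lambda>x y. J x y - of_real c * ident x y) = 0"
    by (simp add: expect_diff expect_smult J_mean one)
  have "mmult C (\<lambda>x y. J x y - of_real c * ident x y) (\<lambda>x y. J x y - of_real c * ident x y) x z
      = mmult C J J x z - of_real (2 * c) * J x z + of_real (c * c) * ident x z"
    if "x \<in> C" "z \<in> C" for x z
    using fin that
    by (simp add: mmult_diff_left mmult_diff_right mmult_smult_left mmult_smult_right
        mmult_ident_left mmult_ident_right algebra_simps)
  then have "expect C \<sigma> (mmult C (\<lambda>x y. J x y - of_real c * ident x y) (\<lambda>x y. J x y - of_real c * ident x y))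
      = expect C \<sigma> (\<lambda>x z. mmult C J J x z - of_real (2 * c) * J x z + of_real (c * c) * ident x z)"
    by (intro expect_cong) simp
  also have "\<dots> = expect C \<sigma> (mmult C J J) - of_real (c * c)"
    by (simp add: expect_add expect_diff expect_smult J_mean one)
  finally show "Re (expect C \<sigma> (mmult C (\<lambda>x y. J x y - of_real c * ident x y) (\<lambda>x y. J x y - of_real c * ident x y)))
      = Re (expect C \<sigma> (mmult C J J)) - c\<^sup>2"
    by (simp add: power2_eq_square)
qed

lemma expect_tensor_square_sum_embed:
  assumes fin: "finite \<Lambda>" and disj: "disjoint \<Lambda>" and fin_blocks: "\<And>A. A \<in> \<Lambda> \<Longrightarrow> finite A"
    and dens: "\<And>A. A \<in> \<Lambda> \<Longrightarrow> density_on A (\<tau> A)"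
    and mean: "\<And>A. A \<in> \<Lambda> \<Longrightarrow> expect (cfg A) (\<tau> A) (K A) = 0"
  shows "expect (cfg (\<Union>\<Lambda>)) (tensor \<Lambda> \<tau>) (mmult (cfg (\<Union>\<Lambda>))
      (\<lambda>x y. \<Sum>A\<in>\<Lambda>. embed \<Lambda> A (K A) x y) (\<lambda>x y. \<Sum>A\<in>\<Lambda>. embed \<Lambda> A (K A) x y))
    = (\<Sum>A\<in>\<Lambda>. expect (cfg A) (\<tau> A) (mmult (cfg A) (K A) (K A)))"
proof -
  have "expect (cfg (\<Union>\<Lambda>)) (tensor \<Lambda> \<tau>) (mmult (cfg (\<Union>\<Lambda>))
      (\<lambda>x y. \<Sum>A\<in>\<Lambda>. embed \<Lambda> A (K A) x y) (\<lambda>x y. \<Sum>A\<in>\<Lambda>. embed \<Lambda> A (K A) x y))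
    = (\<Sum>A\<in>\<Lambda>. \<Sum>A'\<in>\<Lambda>.
        expect (cfg (\<Union>\<Lambda>)) (tensor \<Lambda> \<tau>) (mmult (cfg (\<Union>\<Lambda>)) (embed \<Lambda> A (K A)) (embed \<Lambda> A' (K A'))))"
    unfolding mmult_sum_left mmult_sum_right by (simp add: expect_sum)
  also have "\<dots> = (\<Sum>A\<in>\<Lambda>. \<Sum>A'\<in>\<Lambda>. if A' = A then expect (cfg A) (\<tau> A) (mmult (cfg A) (K A) (K A)) else 0)"
    using expect_tensor_embed_mmult[OF fin disj fin_blocks dens] mean
    by (intro sum.cong refl) auto
  also have "\<dots> = (\<Sum>A\<in>\<Lambda>. expect (cfg A) (\<tau> A) (mmult (cfg A) (K A) (K A)))"
    using fin by (simp cong: sum.cong)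
  finally show ?thesis .
qed

lemma centered_spin_variance_le:
  assumes unit: "n1\<^sup>2 + n2\<^sup>2 + n3\<^sup>2 = 1" and "finite A" and dens: "density_on A \<tau>"
  defines "K \<equiv> \<lambda>x y. spin n1 n2 n3 A x y - of_real (Re (expect (cfg A) \<tau> (spin n1 n2 n3 A))) * ident x y"
  shows "expect (cfg A) \<tau> K = 0"
    and "Re (expect (cfg A) \<tau> (mmult (cfg A) K K)) \<le> (real (card A))\<^sup>2 / 4"
proof -
  note centered = expect_centered_square[OF finite_cfg[OF \<open>finite A\<close>] density_on_hermitian[OF dens]
      density_on_trace[OF dens] hermitian_on_spin[of "cfg A" n1 n2 n3 A]]
  show "expect (cfg A) \<tau> K = 0"
    using centered(1) by (simp add: K_def)
  show "Re (expect (cfg A) \<tau> (mmult (cfg A) K K)) \<le> (real (card A))\<^sup>2 / 4"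
    using centered(2) expect_spin_square_le[OF unit \<open>finite A\<close> dens]
      zero_le_power2[of "Re (expect (cfg A) \<tau> (spin n1 n2 n3 A))"]
    unfolding K_def by linarith
qed

lemma product_variance_le:
  assumes unit: "n1\<^sup>2 + n2\<^sup>2 + n3\<^sup>2 = 1" and part: "partition_on S \<Lambda>" and "finite S"
    and dens: "\<And>A. A \<in> \<Lambda> \<Longrightarrow> density_on A (\<tau> A)"
  obtains c :: real where
    "4 * Re (expect (cfg S) (tensor \<Lambda> \<tau>) (mmult (cfg S)
        (\<lambda>x y. spin n1 n2 n3 S x y - of_real c * ident x y) (\<lambda>x y. spin n1 n2 n3 S x y - of_real c * ident x y)))
      \<le> (\<Sum>A\<in>\<Lambda>. (real (card A))\<^sup>2)"
proof -
  have S: "\<Union>\<Lambda> = S" and disj: "disjoint \<Lambda>"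
    using part by (auto simp: partition_on_def)
  note fin = partition_on_finite(1)[OF part \<open>finite S\<close>]
    and fin_blocks = partition_on_finite(2)[OF part \<open>finite S\<close>]
  define m where "m A = Re (expect (cfg A) (\<tau> A) (spin n1 n2 n3 A))" for A
  define K where "K A x y = spin n1 n2 n3 A x y - of_real (m A) * ident x y" for A x y
  define c where "c = (\<Sum>A\<in>\<Lambda>. m A)"
  define D where "D x y = spin n1 n2 n3 S x y - of_real c * ident x y" for x y
  have K_mean: "expect (cfg A) (\<tau> A) (K A) = 0"
    and K_var: "Re (expect (cfg A) (\<tau> A) (mmult (cfg A) (K A) (K A))) \<le> (real (card A))\<^sup>2 / 4"
    if "A \<in> \<Lambda>" for A
    using centered_spin_variance_le[OF unit fin_blocks[OF that] dens[OF that]]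
    by (simp_all add: K_def[abs_def] m_def)
  have "D x y = (\<Sum>A\<in>\<Lambda>. embed \<Lambda> A (K A) x y)" if "x \<in> cfg S" "y \<in> cfg S" for x y
  proof -
    have "embed \<Lambda> A (K A) x y = embed \<Lambda> A (spin n1 n2 n3 A) x y - of_real (m A) * ident x y" if "A \<in> \<Lambda>" for A
      using embed_ident[OF fin, of x y A] \<open>x \<in> cfg S\<close> \<open>y \<in> cfg S\<close> S
      by (simp add: embed_eq[OF fin that] K_def algebra_simps)
    then show ?thesis
      using spin_Union_eq_sum_embed[OF fin disj fin_blocks, of x y n1 n2 n3] that S
      by (simp add: D_def c_def sum_subtractf sum_distrib_right)
  qed
  then have "expect (cfg S) (tensor \<Lambda> \<tau>) (mmult (cfg S) D D)
      = expect (cfg S) (tensor \<Lambda> \<tau>) (mmult (cfg S) (\<lambda>x y. \<Sum>A\<in>\<Lambda>. embed \<Lambda> A (K A) x y)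
          (\<lambda>x y. \<Sum>A\<in>\<Lambda>. embed \<Lambda> A (K A) x y))"
    by (intro expect_cong mmult_cong) simp_all
  also have "\<dots> = (\<Sum>A\<in>\<Lambda>. expect (cfg A) (\<tau> A) (mmult (cfg A) (K A) (K A)))"
    using expect_tensor_square_sum_embed[OF fin disj fin_blocks dens K_mean] S by simp
  finally have "Re (expect (cfg S) (tensor \<Lambda> \<tau>) (mmult (cfg S) D D)) \<le> (\<Sum>A\<in>\<Lambda>. (real (card A))\<^sup>2 / 4)"
    using K_var by (simp add: sum_mono)
  then show thesis
    by (intro that[of c]) (simp add: D_def[abs_def] sum_divide_distrib[symmetric])
qed

lemma expect_fisher_witness_product_le:
  assumes unit: "n1\<^sup>2 + n2\<^sup>2 + n3\<^sup>2 = 1" and part: "partition_on S \<Lambda>" and "finite S"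
    and dens: "\<And>A. A \<in> \<Lambda> \<Longrightarrow> density_on A (\<tau> A)" and X: "hermitian_on (cfg S) X"
  shows "Re (expect (cfg S) (tensor \<Lambda> \<tau>) (fisher_witness (cfg S) (spin n1 n2 n3 S) X))
    \<le> (\<Sum>A\<in>\<Lambda>. (real (card A))\<^sup>2)"
proof -
  obtain c where "4 * Re (expect (cfg S) (tensor \<Lambda> \<tau>) (mmult (cfg S)
      (\<lambda>x y. spin n1 n2 n3 S x y - of_real c * ident x y) (\<lambda>x y. spin n1 n2 n3 S x y - of_real c * ident x y)))
    \<le> (\<Sum>A\<in>\<Lambda>. (real (card A))\<^sup>2)"
    using product_variance_le[OF unit part \<open>finite S\<close> dens] by blast
  moreover have "psd_on (cfg S) (tensor \<Lambda> \<tau>)"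
    by (rule psd_tensor_partition[OF part \<open>finite S\<close> dens])
  ultimately show ?thesis
    using expect_fisher_witness_le[OF finite_cfg[OF \<open>finite S\<close>] hermitian_on_spin[of "cfg S" n1 n2 n3 S] X,
        of "tensor \<Lambda> \<tau>" c]
    by linarith
qed

lemma sum_pronic_le:
  fixes t :: "'a \<Rightarrow> int"
  assumes "finite L" and nonneg: "\<And>A. A \<in> L \<Longrightarrow> 0 \<le> t A" and bound: "\<And>A. A \<in> L \<Longrightarrow> t A \<le> s"
  shows "(\<Sum>A\<in>L. (t A + 1) * t A) \<le> (s + 1) * (\<Sum>A\<in>L. t A)"
    and "(\<Sum>A\<in>L. (t A + 1) * t A) \<le> ((\<Sum>A\<in>L. t A) + 1) * (\<Sum>A\<in>L. t A)"
proof -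
  show "(\<Sum>A\<in>L. (t A + 1) * t A) \<le> (s + 1) * (\<Sum>A\<in>L. t A)"
    unfolding sum_distrib_left using nonneg bound by (intro sum_mono mult_right_mono) auto
  have "t A \<le> (\<Sum>A\<in>L. t A)" if "A \<in> L" for A
    using that nonneg \<open>finite L\<close> by (intro member_le_sum) auto
  then show "(\<Sum>A\<in>L. (t A + 1) * t A) \<le> ((\<Sum>A\<in>L. t A) + 1) * (\<Sum>A\<in>L. t A)"
    unfolding sum_distrib_left[of "(\<Sum>A\<in>L. t A) + 1"] using nonneg by (intro sum_mono mult_right_mono) auto
qed

lemma sum_pronic_dyson:
  fixes t :: "'a \<Rightarrow> int" and s :: int
  assumes "finite L" "0 \<le> s" and nonneg: "\<And>A. A \<in> L \<Longrightarrow> 0 \<le> t A" and bound: "\<And>A. A \<in> L \<Longrightarrow> t A \<le> s"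
  defines "T \<equiv> \<Sum>A\<in>L. t A" and "R \<equiv> \<Sum>A\<in>L. (t A + 1) * t A"
  shows "4 * ((s + 1) * s + R) \<le> (2 * s + 1 + T)\<^sup>2 - 1 \<or> T = 1 \<and> s = 1 \<and> R \<le> 2"
proof -
  have R_le: "R \<le> (s + 1) * T" "R \<le> (T + 1) * T"
    using sum_pronic_le[OF \<open>finite L\<close> nonneg bound] by (simp_all add: T_def R_def)
  have "0 \<le> T" unfolding T_def using nonneg by (rule sum_nonneg)
  show ?thesis
  proof (cases "T = 1")
    case True
    have "s \<noteq> 0"
    proof
      assume "s = 0"
      with nonneg bound have "T = 0" unfolding T_def by (intro sum.neutral) (auto intro: antisym)
      with True show False by simp
    qed
    then consider "s = 1" | "2 \<le> s" using \<open>0 \<le> s\<close> by linarith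
    then show ?thesis
      using R_le True by cases (auto simp: power2_eq_square algebra_simps)
  next
    case False
    with \<open>0 \<le> T\<close> have "T = 0 \<or> 2 \<le> T" by auto
    then have "2 * T \<le> T * T" by auto
    with R_le(1) show ?thesis by (simp add: power2_eq_square algebra_simps)
  qed
qed

lemma sum_square_le_dyson:
  fixes n :: "'a \<Rightarrow> nat"
  assumes fin: "finite \<Lambda>" and "\<Lambda> \<noteq> {}" and pos: "\<And>A. A \<in> \<Lambda> \<Longrightarrow> 1 \<le> n A"
  defines "D \<equiv> int (\<Sum>A\<in>\<Lambda>. n A) + int (Max (n ` \<Lambda>)) - int (card \<Lambda>)"
  shows "1 \<le> D"
    and "4 * (\<Sum>A\<in>\<Lambda>. (int (n A))\<^sup>2) \<le> 4 * int (\<Sum>A\<in>\<Lambda>. n A) + D\<^sup>2 - 1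
      \<or> D = 4 \<and> (\<Sum>A\<in>\<Lambda>. (int (n A))\<^sup>2) \<le> int (\<Sum>A\<in>\<Lambda>. n A) + 4"
proof -
  have "Max (n ` \<Lambda>) \<in> n ` \<Lambda>"
    using fin \<open>\<Lambda> \<noteq> {}\<close> by (intro Max_in) auto
  then obtain A0 where A0: "A0 \<in> \<Lambda>" "n A0 = Max (n ` \<Lambda>)" by auto
  define s where "s = int (n A0) - 1"
  define t where "t A = int (n A) - 1" for A
  define L where "L = \<Lambda> - {A0}"
  have "0 \<le> s" using pos[OF A0(1)] by (simp add: s_def)
  have le_max: "n A \<le> n A0" if "A \<in> \<Lambda>" for A
    using fin that A0(2) by simp
  have t: "0 \<le> t A" "t A \<le> s" if "A \<in> L" for A
    using pos[of A] le_max[of A] that unfolding L_def by (auto simp: t_def s_def)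
  have "(\<Sum>A\<in>\<Lambda>. t A) = int (\<Sum>A\<in>\<Lambda>. n A) - int (card \<Lambda>)"
    by (simp add: t_def sum_subtractf)
  then have D_eq: "D = 2 * s + 1 + (\<Sum>A\<in>L. t A)"
    using sum.remove[OF fin A0(1), of t] A0(2) by (simp add: D_def s_def L_def t_def)
  then show "1 \<le> D"
    using \<open>0 \<le> s\<close> t(1) by (simp add: sum_nonneg)
  have "(\<Sum>A\<in>\<Lambda>. (int (n A))\<^sup>2) = (\<Sum>A\<in>\<Lambda>. int (n A)) + (\<Sum>A\<in>\<Lambda>. (t A + 1) * t A)"
    by (simp add: t_def power2_eq_square algebra_simps flip: sum.distrib)
  also have "(\<Sum>A\<in>\<Lambda>. (t A + 1) * t A) = (s + 1) * s + (\<Sum>A\<in>L. (t A + 1) * t A)"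
    using sum.remove[OF fin A0(1), of "\<lambda>A. (t A + 1) * t A"] by (simp add: s_def L_def t_def)
  finally show "4 * (\<Sum>A\<in>\<Lambda>. (int (n A))\<^sup>2) \<le> 4 * int (\<Sum>A\<in>\<Lambda>. n A) + D\<^sup>2 - 1
      \<or> D = 4 \<and> (\<Sum>A\<in>\<Lambda>. (int (n A))\<^sup>2) \<le> int (\<Sum>A\<in>\<Lambda>. n A) + 4"
    using sum_pronic_dyson[of L s t] t \<open>0 \<le> s\<close> fin D_eq by (auto simp: L_def)
qed

definition dyson_bound :: "nat \<Rightarrow> int \<Rightarrow> real"
  where "dyson_bound N r =
    (if r = 4 - int N then real N + 4 else (real_of_int (int N + r))\<^sup>2 / 4 - 1 / 4 + real N)"

lemma le_dyson_bound:
  fixes M D r :: int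
  assumes "1 \<le> D" "D \<le> int N + r"
    and M: "4 * M \<le> 4 * int N + D\<^sup>2 - 1 \<or> D = 4 \<and> M \<le> int N + 4"
  shows "real_of_int M \<le> dyson_bound N r"
proof -
  have "D\<^sup>2 \<le> (int N + r)\<^sup>2"
    using assms(1,2) by (intro power_mono) auto
  from M show ?thesis
  proof (elim disjE conjE)
    assume "4 * M \<le> 4 * int N + D\<^sup>2 - 1"
    with \<open>D\<^sup>2 \<le> (int N + r)\<^sup>2\<close> have "4 * M \<le> 4 * int N + (int N + r)\<^sup>2 - 1"
      by simp
    then have "4 * real_of_int M \<le> 4 * real N + (real_of_int (int N + r))\<^sup>2 - 1"
      by (simp flip: of_int_le_iff[where 'a = real])
    then show ?thesis by (auto simp: dyson_bound_def)
  next
    assume "D = 4" "M \<le> int N + 4"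
    then have le: "real_of_int M \<le> real N + 4"
      by (simp flip: of_int_le_iff[where 'a = real])
    show ?thesis
    proof (cases "r = 4 - int N")
      case False
      with \<open>D = 4\<close> assms(2) have "5 \<le> real_of_int (int N + r)"
        by simp
      then have "5\<^sup>2 \<le> (real_of_int (int N + r))\<^sup>2"
        by (intro power_mono) auto
      with le False show ?thesis by (simp add: dyson_bound_def)
    qed (simp add: dyson_bound_def le)
  qed
qed

lemma sum_card_square_le_dyson_bound:
  assumes part: "partition_on {1..N} \<Lambda>" and "N \<ge> 1"
    and rank: "int (Max (card ` \<Lambda>)) - int (card \<Lambda>) \<le> r"
  shows "(\<Sum>A\<in>\<Lambda>. (real (card A))\<^sup>2) \<le> dyson_bound N r"
proof -
  have "\<Lambda> \<noteq> {}"
    using part \<open>N \<ge> 1\<close> by (auto simp: partition_on_def)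
  moreover have "(\<Sum>A\<in>\<Lambda>. card A) = N"
    using partition_on_sum_card[OF part finite_atLeastAtMost] by simp
  moreover have "\<And>A. A \<in> \<Lambda> \<Longrightarrow> 1 \<le> card A"
    using partition_on_card_pos[OF part finite_atLeastAtMost] .
  ultimately have "real_of_int (\<Sum>A\<in>\<Lambda>. (int (card A))\<^sup>2) \<le> dyson_bound N r"
    using sum_square_le_dyson[where \<Lambda> = \<Lambda> and n = card] partition_on_finite(1)[OF part finite_atLeastAtMost]
      rank by (intro le_dyson_bound[where D = "int N + int (Max (card ` \<Lambda>)) - int (card \<Lambda>)"]) auto
  then show ?thesis by simp
qed

lemma Re_convex_combination_le:
  assumes "\<And>j. j < m \<Longrightarrow> 0 \<le> p j" "(\<Sum>j<m. p j) = 1" "\<And>j. j < m \<Longrightarrow> Re (X j) \<le> b"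
  shows "Re (\<Sum>j<m. of_real (p j) * X j) \<le> b"
proof -
  have "Re (\<Sum>j<m. of_real (p j) * X j) = (\<Sum>j<m. p j * Re (X j))"
    by simp
  also have "\<dots> \<le> (\<Sum>j<m. p j * b)"
    using assms by (intro sum_mono mult_left_mono) auto
  also have "\<dots> = b"
    using assms(2) by (simp flip: sum_distrib_right)
  finally show ?thesis .
qed

lemma expect_le_if_dyson_rank_le:
  assumes "dyson_rank_le N r \<rho>"
    and product: "\<And>\<Lambda> \<tau>. partition_on {1..N} \<Lambda> \<Longrightarrow> int (Max (card ` \<Lambda>)) - int (card \<Lambda>) \<le> r
      \<Longrightarrow> (\<And>A. A \<in> \<Lambda> \<Longrightarrow> density_on A (\<tau> A)) \<Longrightarrow> Re (expect (cfg {1..N}) (tensor \<Lambda> \<tau>) Z) \<le> b"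
  shows "Re (expect (cfg {1..N}) \<rho> Z) \<le> b"
proof -
  obtain m :: nat and p \<Lambda> \<sigma> where p: "\<forall>j<m. 0 \<le> p j" "(\<Sum>j<m. p j) = 1"
    and \<Lambda>: "\<forall>j<m. partition_on {1..N} (\<Lambda> j) \<and> int (Max (card ` \<Lambda> j)) - int (card (\<Lambda> j)) \<le> r
      \<and> separable_wrt N (\<Lambda> j) (\<sigma> j)"
    and \<rho>: "\<forall>x\<in>cfg {1..N}. \<forall>y\<in>cfg {1..N}. \<rho> x y = (\<Sum>j<m. of_real (p j) * \<sigma> j x y)"
    using assms(1) unfolding dyson_rank_le_def by blast
  have "Re (expect (cfg {1..N}) (\<sigma> j) Z) \<le> b" if j: "j < m" for j
  proof -
    obtain mj :: nat and q \<tau> where q: "\<forall>g<mj. 0 \<le> q g" "(\<Sum>g<mj. q g) = 1"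
      and \<tau>: "\<forall>g<mj. \<forall>A\<in>\<Lambda> j. density_on A (\<tau> g A)"
      and \<sigma>: "\<forall>x\<in>cfg {1..N}. \<forall>y\<in>cfg {1..N}. \<sigma> j x y = (\<Sum>g<mj. of_real (q g) * tensor (\<Lambda> j) (\<tau> g) x y)"
      using \<Lambda> j unfolding separable_wrt_def tensor_def by blast
    have "expect (cfg {1..N}) (\<sigma> j) Z = (\<Sum>g<mj. of_real (q g) * expect (cfg {1..N}) (tensor (\<Lambda> j) (\<tau> g)) Z)"
      using \<sigma> by (intro expect_mixture) blast
    then show ?thesis
      using q \<tau> \<Lambda> j by (simp only:) (intro Re_convex_combination_le product; auto)
  qed
  moreover have "expect (cfg {1..N}) \<rho> Z = (\<Sum>j<m. of_real (p j) * expect (cfg {1..N}) (\<sigma> j) Z)"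
    using \<rho> by (intro expect_mixture) blast
  ultimately show ?thesis
    using p by (simp only:) (intro Re_convex_combination_le; auto)
qed

theorem mainTheorem5:
  fixes N :: nat and r :: int and \<rho> :: op and n1 n2 n3 :: real
  assumes "N \<ge> 1"
    and "- (int N - 1) \<le> r" and "r \<le> int N - 1"
    and "r \<noteq> int N - 2" and "r \<noteq> - (int N - 2)"
    and "density_on {1..N} \<rho>"
    and "dyson_rank_le N r \<rho>"
    and "n1^2 + n2^2 + n3^2 = 1"
  shows "(r \<noteq> 4 - int N \<longrightarrow>
            QFI {1..N} \<rho> (J_op N n1 n2 n3) \<le> (real_of_int (int N + r))^2 / 4 - 1/4 + real N) \<and>
         (r = 4 - int N \<longrightarrow> QFI {1..N} \<rho> (J_op N n1 n2 n3) \<le> real N + 4)"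
proof -
  let ?C = "cfg {1..N}" and ?J = "spin n1 n2 n3 {1..N}"
  obtain e lam where eb: "eigenbasis_on ?C \<rho> e lam" and qfi: "QFI {1..N} \<rho> ?J = fisher_sum ?C e lam ?J"
    using QFI_eq_fisher_sum[OF finite_atLeastAtMost density_on_hermitian[OF assms(6)]] by blast
  obtain X where X: "hermitian_on ?C X"
    and witness: "fisher_sum ?C e lam ?J = Re (expect ?C \<rho> (fisher_witness ?C ?J X))"
    using fisher_sum_eq_expect_witness[OF finite_cfg[OF finite_atLeastAtMost] eb hermitian_on_spin] by blast
  have "Re (expect ?C \<rho> (fisher_witness ?C ?J X)) \<le> dyson_bound N r"
  proof (rule expect_le_if_dyson_rank_le[OF assms(7)])
    fix \<Lambda> \<tau> assume part: "partition_on {1..N} \<Lambda>"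
      and rank: "int (Max (card ` \<Lambda>)) - int (card \<Lambda>) \<le> r" and dens: "\<And>A. A \<in> \<Lambda> \<Longrightarrow> density_on A (\<tau> A)"
    show "Re (expect ?C (tensor \<Lambda> \<tau>) (fisher_witness ?C ?J X)) \<le> dyson_bound N r"
      using expect_fisher_witness_product_le[OF assms(8) part finite_atLeastAtMost dens X]
        sum_card_square_le_dyson_bound[OF part assms(1) rank] by linarith
  qed
  then show ?thesis
    using qfi witness by (simp add: J_op_eq_spin dyson_bound_def split: if_splits)
qed

end
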